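(* Let $n\ge1$ and let $c\ge n-1$ be an integer. Define $k(n)=c-n+1$ and $k(i)=c-n+i+1$ for $1\le i<n$ (so that $c=k(i)+n-i-1$ for $i<n$ and $c=k(n)+n-1$). Let $a_1,\dots,a_n\in\{0,1,\dots,p-1\}$, not all zero, put $m(i)=a_ip^{k(i)}$, $d=\prod_{i=1}^n d_{n,i}^{m(i)}$, and $$j=\max\big(\{n : a_n\ne0\}\cup\{n-i : 1\le i<n,\ a_i\neq 0\}\big).$$ Then for some nonzero scalar $u\in\mathbb{F}_p$: $P(c,j)(d)=u\,d_{n,n}^{p^{k(n)}}\,d$ if $j=n$, and $P(c,j)(d)=u\,d_{n,n}^{p^{k(n-j)}}\,d\,d_{n,n-j}^{-p^{k(n-j)}}$ if $j<n$ (the latter is a monomial since $a_{n-j}\ge1$). Moreover, $P(c,t)(d)=0$ for every integer $t$ with $j<t\le c+1$.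
   Context: Let $p$ be a prime and $\mathbb{F}_p=\mathbb{Z}/p\mathbb{Z}$. The Dickson algebra $\mathbb{F}_p[y_1,\dots,y_n]^{GL_n(\mathbb{F}_p)}=\mathbb{F}_p[d_{n,1},\dots,d_{n,n}]$ is the polynomial algebra on the Dickson invariants $d_{n,i}$ (the coefficients, up to sign, of $\prod_{v\in \mathbb{F}_p\langle y_1,\dots,y_n\rangle}(X-v)=X^{p^n}+\sum_{i}(-1)^i d_{n,i}X^{p^{n-i}}$), with $|y_i|=2$, $|d_{n,i}|=2(p^n-p^{n-i})$ for $p$ odd and $|y_i|=1$, $|d_{n,i}|=2^n-2^{n-i}$ for $p=2$. The mod $p$ Steenrod algebra acts by reduced powers $P^r$ (for $p=2$, $P^r$ means $Sq^r$). Composites are applied right to left. For integers $c\ge0$, $1\le j\le c+1$: $P(c,j)=P^{p^{c-j+1}}\cdots P^{p^{c-1}}P^{p^{c}}$. *)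

theory Defs
  imports Main "HOL-Library.Poly_Mapping" "HOL-Computational_Algebra.Polynomial"
    "HOL-Computational_Algebra.Primes" "HOL-Library.Cardinality" "HOL-Library.FuncSet"
begin

text \<open>Multivariate polynomials over the coefficient field 'a (a finite field of prime
  cardinality p, i.e. F_p): monomials are finitely supported exponent vectors
  nat =>0 nat (variable y_i has index i), polynomials are finitely supported
  coefficient maps.\<close>

type_synonym 'a mpoly = "(nat \<Rightarrow>\<^sub>0 nat) \<Rightarrow>\<^sub>0 'a"

definition mconst :: "'a::comm_ring_1 \<Rightarrow> 'a mpoly" where
  "mconst c = Poly_Mapping.single 0 c"

definition Y :: "nat \<Rightarrow> 'a::comm_ring_1 mpoly" where
  "Y i = Poly_Mapping.single (Poly_Mapping.single i 1) 1"

text \<open>Total reduced power: the ring homomorphism sending y_i to y_i + t y_i^p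
  (p = CARD('a)), with values polynomials in an auxiliary variable t.\<close>

definition totalP :: "'a::{comm_ring_1,finite} mpoly \<Rightarrow> 'a mpoly poly" where
  "totalP f = (let q = CARD('a) in \<Sum>m\<in>Poly_Mapping.keys f.
      [: mconst (Poly_Mapping.lookup f m) :] *
      (\<Prod>i\<in>Poly_Mapping.keys m. [: Y i, Y i ^ q :] ^ Poly_Mapping.lookup m i))"

definition steenrodP :: "nat \<Rightarrow> 'a::{comm_ring_1,finite} mpoly \<Rightarrow> 'a mpoly" where
  "steenrodP r f = coeff (totalP f) r"

text \<open>P(c,j) = P^{p^{c-j+1}} ... P^{p^{c-1}} P^{p^c} (applied right to left).\<close>

fun Pcj :: "nat \<Rightarrow> nat \<Rightarrow> 'a::{comm_ring_1,finite} mpoly \<Rightarrow> 'a mpoly" where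
  "Pcj c 0 f = f"
| "Pcj c (Suc j) f = steenrodP (CARD('a) ^ (c - j)) (Pcj c j f)"

text \<open>Dickson invariants: prod over v in span(y_1..y_n) of (X - v)
  = X^{p^n} + sum_i (-1)^i d_{n,i} X^{p^{n-i}}.\<close>

definition dickson_poly :: "nat \<Rightarrow> 'a::{comm_ring_1,finite} mpoly poly" where
  "dickson_poly n = (\<Prod>v\<in>(\<lambda>cf. \<Sum>i\<in>{1..n}. mconst (cf i) * Y i) ` (PiE {1..n} (\<lambda>_. UNIV)).
      [: - v, 1 :])"

definition dickson :: "nat \<Rightarrow> nat \<Rightarrow> 'a::{comm_ring_1,finite} mpoly" where
  "dickson n i = (-1) ^ i * coeff (dickson_poly n) (CARD('a) ^ (n - i))"

end

theory Submission
  imports Defs "HOL-Number_Theory.Cong"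
begin

text \<open>
  Write P_t = sum_r t^r P^r for the total reduced power: it is the ring homomorphism
  totalP sending y_i to y_i + t y_i^p, and P^r is its coefficient of t^r. The proof has four
  layers.
  (1) Generalities: F_p has characteristic p and satisfies x^p = x; totalP is a ring
      homomorphism whose constant term is the identity; polynomials in t with a "gap" (no terms
      in degrees 0 < r < N) are closed under products and Frobenius powers, with an explicit
      coefficient of t^N.
  (2) The Dickson polynomial F_n(X) = prod_v (X - v), v ranging over the span of y_1..y_n, is
      additive, F_n = sum_e c_e X^(p^e), by the recursion F_(n+1) = F_n^p - F_n(y_(n+1))^(p-1) F_n.
  (3) Applying totalP to the coefficients of F_n and comparing additive polynomials that vanish
      on the span yields the leading terms
        P_t d_(n,i) = d_(n,i) + d_(n,i+1) t^(p^(n-i-1)) + ...          (i < n),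
        P_t d_(n,n) = d_(n,n) - d_(n,1) d_(n,n) t^(p^(n-1)) + ... .
  (4) Hence P^N of a Dickson monomial only sees the factors whose gap is exactly N. In P(c,j) d
      every nonzero digit a_i creates a term that moves one position per operation and dies
      after a fixed lifetime; j is the largest lifetime, so exactly one term survives the j-th
      operation and none survives a later one.
\<close>

section \<open>Prime fields\<close>

text \<open>Translating every summand of the sum of all field elements by 1 shows that the
  cardinality vanishes in the field.\<close>
lemma of_nat_card_eq_0: "of_nat CARD('a::{field,finite}) = (0::'a)"
proof -
  have "(\<Sum>y\<in>(UNIV::'a set). y + 1) = (\<Sum>y\<in>UNIV. y)"
    by (rule sum.reindex_bij_witness[of _ "\<lambda>y. y - 1" "\<lambda>y. y + 1"]) auto
  hence "(\<Sum>y\<in>(UNIV::'a set). y) + of_nat CARD('a) = (\<Sum>y\<in>UNIV. y)"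
    by (simp add: sum.distrib)
  thus ?thesis by simp
qed

lemma CHAR_eq_card:
  assumes "prime CARD('a::{field,finite})"
  shows "CHAR('a) = CARD('a)"
proof -
  have "CHAR('a) dvd CARD('a)"
    using of_nat_card_eq_0[where 'a='a] of_nat_eq_0_iff_char_dvd by blast
  moreover have "CHAR('a) \<noteq> 1"
    using of_nat_CHAR[where 'a='a] by (metis of_nat_1 one_neq_zero)
  ultimately show ?thesis using assms by (metis prime_nat_iff)
qed

lemma of_nat_power_CHAR:
  assumes "prime CHAR('b::comm_semiring_1)"
  shows "(of_nat k :: 'b) ^ CHAR('b) = of_nat k"
proof (induction k)
  case 0
  show ?case using prime_gt_0_nat[OF assms] by (simp add: power_0_left)
next
  case (Suc k)
  have "(1 + of_nat k :: 'b) ^ CHAR('b) = 1 ^ CHAR('b) + of_nat k ^ CHAR('b)"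
    by (rule freshmans_dream[OF assms refl])
  with Suc show ?case by simp
qed

text \<open>A field of prime cardinality p is its own prime field, so x^p = x.\<close>
lemma prime_field_power_card:
  fixes x :: "'a::{field,finite}"
  assumes "prime CARD('a)"
  shows "x ^ CARD('a) = x"
proof -
  have char: "CHAR('a) = CARD('a)" by (rule CHAR_eq_card[OF assms])
  have "inj_on (of_nat :: nat \<Rightarrow> 'a) {..<CARD('a)}"
    by (rule inj_onI) (simp add: of_nat_eq_iff_cong_CHAR char cong_def)
  hence "of_nat ` {..<CARD('a)} = (UNIV :: 'a set)"
    by (intro card_eq_UNIV_imp_eq_UNIV) (simp_all add: card_image)
  then obtain r where "x = of_nat r" by (metis UNIV_I imageE)
  thus ?thesis using of_nat_power_CHAR[where 'b='a, of r] assms by (simp add: char)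
qed

lemma prime_field_power_card_pow:
  fixes x :: "'a::{field,finite}"
  assumes "prime CARD('a)"
  shows "x ^ (CARD('a) ^ e) = x"
proof (induction e)
  case (Suc e)
  have "x ^ (CARD('a) ^ Suc e) = (x ^ (CARD('a) ^ e)) ^ CARD('a)"
    by (simp only: power_Suc2 power_mult)
  thus ?case using Suc by (simp add: prime_field_power_card[OF assms])
qed simp

lemma CHAR_mpoly: "CHAR('a::comm_ring_1 mpoly) = CHAR('a)"
proof (rule CHAR_eqI)
  show "of_nat CHAR('a) = (0::'a mpoly)"
    by (metis of_nat_CHAR single_of_nat single_zero)
  fix x assume "of_nat x = (0::'a mpoly)"
  hence "Poly_Mapping.lookup (of_nat x :: 'a mpoly) 0 = 0" by simp
  hence "of_nat x = (0::'a)" by (simp add: lookup_of_nat)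
  thus "CHAR('a) dvd x" by (simp add: of_nat_eq_0_iff_char_dvd)
qed

text \<open>In characteristic p, (-x)^(p^h) = -(x^(p^h)); for p = 2 because -1 = 1.\<close>
lemma minus_power_CHAR_pow:
  assumes "prime CHAR('b::comm_ring_1)"
  shows "(- x :: 'b) ^ (CHAR('b) ^ h) = - (x ^ (CHAR('b) ^ h))"
proof (induction h)
  case (Suc h)
  have "(- x :: 'b) ^ (CHAR('b) ^ Suc h) = ((- x) ^ (CHAR('b) ^ h)) ^ CHAR('b)"
    by (simp only: power_Suc2 power_mult)
  also have "\<dots> = (- (x ^ (CHAR('b) ^ h))) ^ CHAR('b)" using Suc by simp
  also have "\<dots> = - ((x ^ (CHAR('b) ^ h)) ^ CHAR('b))"
    by (rule minus_power_prime_CHAR) (use assms in auto)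
  also have "\<dots> = - (x ^ (CHAR('b) ^ Suc h))" by (simp only: power_Suc2 power_mult)
  finally show ?case .
qed simp

lemma mconst_0[simp]: "mconst 0 = 0" by (simp add: mconst_def)
lemma mconst_1[simp]: "mconst 1 = 1" by (simp add: mconst_def)
lemma mconst_add: "mconst (a + b) = mconst a + mconst b" by (simp add: mconst_def single_add)
lemma mconst_mult: "mconst (a * b) = mconst a * mconst b" by (simp add: mconst_def mult_single)
lemma mconst_uminus: "mconst (- a) = - mconst a" by (simp add: mconst_def single_uminus)
lemma mconst_diff: "mconst (a - b) = mconst a - mconst b" by (simp add: mconst_def single_diff)
lemma mconst_power: "mconst (a ^ k) = mconst a ^ k"
  by (induction k) (simp_all add: mconst_mult)
lemma mconst_of_nat: "mconst (of_nat k) = of_nat k"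
  by (induction k) (simp_all add: mconst_add)
lemma mconst_eq_0_iff[simp]: "mconst a = 0 \<longleftrightarrow> a = 0"
  by (metis lookup_single_eq lookup_zero mconst_def single_zero)

section \<open>The total reduced power is a ring homomorphism\<close>

definition total_monomial :: "(nat \<Rightarrow>\<^sub>0 nat) \<Rightarrow> 'a::{comm_ring_1,finite} mpoly poly" where
  "total_monomial m = (\<Prod>i\<in>Poly_Mapping.keys m. [: Y i, Y i ^ CARD('a) :] ^ Poly_Mapping.lookup m i)"

lemma total_monomial_superset:
  assumes "finite K" "Poly_Mapping.keys m \<subseteq> K"
  shows "(total_monomial m :: 'a::{comm_ring_1,finite} mpoly poly) =
    (\<Prod>i\<in>K. [: Y i, Y i ^ CARD('a) :] ^ Poly_Mapping.lookup m i)"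
  unfolding total_monomial_def
  by (rule prod.mono_neutral_left) (use assms in \<open>auto simp: in_keys_iff\<close>)

lemma total_monomial_add:
  "(total_monomial (m1 + m2) :: 'a::{comm_ring_1,finite} mpoly poly) = total_monomial m1 * total_monomial m2"
proof -
  let ?K = "Poly_Mapping.keys m1 \<union> Poly_Mapping.keys m2"
  have "Poly_Mapping.keys (m1 + m2) \<subseteq> ?K" by (rule keys_add)
  thus ?thesis
    by (simp add: total_monomial_superset[of ?K] lookup_add power_add prod.distrib)
qed

lemma totalP_superset:
  assumes "finite K" "Poly_Mapping.keys f \<subseteq> K"
  shows "totalP f = (\<Sum>m\<in>K. [: mconst (Poly_Mapping.lookup f m) :] * total_monomial m)"
  unfolding totalP_def Let_def total_monomial_def[symmetric]
  by (rule sum.mono_neutral_left) (use assms in \<open>auto simp: in_keys_iff\<close>)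

lemma totalP_add: "totalP (f + g) = totalP f + totalP g"
proof -
  let ?K = "Poly_Mapping.keys f \<union> Poly_Mapping.keys g"
  have "Poly_Mapping.keys (f + g) \<subseteq> ?K" by (rule keys_add)
  thus ?thesis
    by (simp add: totalP_superset[of ?K] lookup_add mconst_add sum.distrib smult_add_left)
qed

lemma totalP_0[simp]: "totalP 0 = 0" by (simp add: totalP_def)

lemma totalP_sum: "totalP (sum f A) = (\<Sum>x\<in>A. totalP (f x))"
  by (induction A rule: infinite_finite_induct) (simp_all add: totalP_add)

lemma totalP_single: "totalP (Poly_Mapping.single m c) = [: mconst c :] * total_monomial m"
  by (subst totalP_superset[of "{m}"]) auto

lemma sum_singles: "f = (\<Sum>m\<in>Poly_Mapping.keys f. Poly_Mapping.single m (Poly_Mapping.lookup f m))"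
proof (rule poly_mapping_eqI)
  fix k
  show "Poly_Mapping.lookup f k =
      Poly_Mapping.lookup (\<Sum>m\<in>Poly_Mapping.keys f. Poly_Mapping.single m (Poly_Mapping.lookup f m)) k"
    by (cases "k \<in> Poly_Mapping.keys f") (auto simp: lookup_sum lookup_single when_def in_keys_iff)
qed

lemma totalP_mult: "totalP (f * g) = totalP f * totalP g"
proof -
  let ?s = "\<lambda>h m. Poly_Mapping.single m (Poly_Mapping.lookup h m)"
  have terms: "totalP (?s f a * ?s g b) = totalP (?s f a) * totalP (?s g b)" for a b
    by (simp add: mult_single totalP_single total_monomial_add mconst_mult mult.commute)
  have "f * g = (\<Sum>a\<in>Poly_Mapping.keys f. ?s f a) * (\<Sum>b\<in>Poly_Mapping.keys g. ?s g b)"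
    by (rule arg_cong2[where f=times, OF sum_singles sum_singles])
  also have "\<dots> = (\<Sum>a\<in>Poly_Mapping.keys f. \<Sum>b\<in>Poly_Mapping.keys g. ?s f a * ?s g b)"
    by (simp add: sum_product)
  finally have fg: "totalP (f * g) =
      (\<Sum>a\<in>Poly_Mapping.keys f. \<Sum>b\<in>Poly_Mapping.keys g. totalP (?s f a) * totalP (?s g b))"
    by (simp add: totalP_sum terms)
  have "totalP f * totalP g =
      totalP (\<Sum>a\<in>Poly_Mapping.keys f. ?s f a) * totalP (\<Sum>b\<in>Poly_Mapping.keys g. ?s g b)"
    by (rule arg_cong2[where f="\<lambda>x y. totalP x * totalP y", OF sum_singles sum_singles])
  also have "\<dots> = (\<Sum>a\<in>Poly_Mapping.keys f. \<Sum>b\<in>Poly_Mapping.keys g. totalP (?s f a) * totalP (?s g b))"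
    by (simp add: totalP_sum sum_product)
  finally show ?thesis using fg by simp
qed

lemma totalP_mconst: "totalP (mconst c) = [: mconst c :]"
  by (simp add: mconst_def totalP_single total_monomial_def)

lemma totalP_1[simp]: "totalP 1 = 1"
  using totalP_mconst[of 1] by (simp add: pCons_one)

lemma totalP_Y: "totalP (Y i :: 'a::{comm_ring_1,finite} mpoly) = [: Y i, Y i ^ CARD('a) :]"
  by (simp add: Y_def totalP_single total_monomial_def pCons_one)

lemma totalP_uminus: "totalP (- f) = - totalP f"
proof -
  have "totalP (- f) + totalP f = 0" using totalP_add[of "-f" f] by simp
  thus ?thesis by (simp add: eq_neg_iff_add_eq_0)
qed

lemma totalP_power: "totalP (f ^ k) = totalP f ^ k"
  by (induction k) (simp_all only: power_0 totalP_1 power_Suc totalP_mult)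

lemma totalP_prod: "totalP (prod f A) = (\<Prod>x\<in>A. totalP (f x))"
  by (induction A rule: infinite_finite_induct) (simp_all add: totalP_mult)

lemma Y_power: "Y i ^ e = Poly_Mapping.single (Poly_Mapping.single i e) 1"
proof (induction e)
  case (Suc e)
  have "Poly_Mapping.single i e + Poly_Mapping.single i 1 = Poly_Mapping.single i (Suc e)"
    by (simp flip: single_add)
  with Suc show ?case by (simp add: Y_def mult_single power_Suc2 add.commute)
qed (simp add: Y_def)

lemma prod_single1:
  "(\<Prod>i\<in>A. Poly_Mapping.single (g i) (1::'b::comm_semiring_1)) = Poly_Mapping.single (\<Sum>i\<in>A. g i) 1"
  by (induction A rule: infinite_finite_induct) (simp_all add: mult_single)

lemma coeff0_total_monomial:
  "coeff (total_monomial m :: 'a::{comm_ring_1,finite} mpoly poly) 0 = Poly_Mapping.single m 1"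
proof -
  have "coeff (total_monomial m :: 'a mpoly poly) 0 = (\<Prod>i\<in>Poly_Mapping.keys m. Y i ^ Poly_Mapping.lookup m i)"
    by (simp add: total_monomial_def poly_prod flip: poly_0_coeff_0)
  also have "\<dots> = Poly_Mapping.single m 1"
    by (simp add: Y_power prod_single1 flip: sum_singles)
  finally show ?thesis .
qed

lemma totalP_coeff0: "coeff (totalP f) 0 = f"
proof -
  have "coeff (totalP f) 0 =
      (\<Sum>m\<in>Poly_Mapping.keys f. coeff ([: mconst (Poly_Mapping.lookup f m) :] * total_monomial m) 0)"
    by (simp add: totalP_def Let_def total_monomial_def[symmetric] coeff_sum)
  also have "\<dots> = (\<Sum>m\<in>Poly_Mapping.keys f. Poly_Mapping.single m (Poly_Mapping.lookup f m))"
    by (simp add: coeff0_total_monomial mconst_def mult_single)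
  finally show ?thesis by (simp only: sum_singles[symmetric])
qed

lemma steenrodP_sum: "steenrodP r (sum f A) = (\<Sum>x\<in>A. steenrodP r (f x))"
  by (simp add: steenrodP_def totalP_sum coeff_sum)

lemma steenrodP_mconst_mult: "steenrodP r (mconst u * x) = mconst u * steenrodP r x"
  by (simp add: steenrodP_def totalP_mult totalP_mconst)

section \<open>Frobenius powers and gap polynomials\<close>

lemma poly_frob:
  fixes x :: "'b::comm_ring_1 poly"
  assumes "prime CHAR('b)" "P = CHAR('b) ^ q"
  shows "x ^ P = (\<Sum>m\<le>degree x. monom (coeff x m ^ P) (m * P))"
proof -
  have "x ^ P = (\<Sum>m\<le>degree x. monom (coeff x m) m) ^ P"
    by (simp add: poly_as_sum_of_monoms)
  also have "\<dots> = (\<Sum>m\<le>degree x. monom (coeff x m) m ^ P)"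
    by (rule freshmans_dream_sum') (use assms in simp_all)
  finally show ?thesis by (simp add: monom_power)
qed

lemma coeff_frob:
  fixes x :: "'b::comm_ring_1 poly"
  assumes "prime CHAR('b)" "P = CHAR('b) ^ q"
  shows "coeff (x ^ P) (r * P) = coeff x r ^ P"
    and "\<not> P dvd s \<Longrightarrow> coeff (x ^ P) s = 0"
proof -
  have P0: "P > 0" using assms prime_gt_0_nat by simp
  have c: "coeff (x ^ P) s = (\<Sum>m\<le>degree x. if m * P = s then coeff x m ^ P else 0)" for s
    by (simp add: poly_frob[OF assms] coeff_sum)
  show "\<not> P dvd s \<Longrightarrow> coeff (x ^ P) s = 0"
    unfolding c by (rule sum.neutral) (auto simp del: dvd_mult_cancel_right dvd_times_right_cancel_iff)
  show "coeff (x ^ P) (r * P) = coeff x r ^ P"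
  proof (cases "r \<le> degree x")
    case True
    have "coeff (x ^ P) (r * P) = (\<Sum>m\<le>degree x. if m = r then coeff x m ^ P else 0)"
      using P0 by (simp add: c)
    also have "\<dots> = coeff x r ^ P" using True by simp
    finally show ?thesis .
  next
    case False
    hence "coeff x r = 0" by (simp add: coeff_eq_0)
    moreover have "coeff (x ^ P) (r * P) = 0"
      unfolding c using P0 False by (intro sum.neutral) auto
    ultimately show ?thesis using P0 by (simp add: power_0_left)
  qed
qed

text \<open>A polynomial has a gap below N if it has no terms in degrees 0 < r < N. For such
  polynomials the coefficient of t^N is a first-order quantity: it behaves like a derivation.\<close>
definition gap :: "nat \<Rightarrow> 'b::zero poly \<Rightarrow> bool" where
  "gap N x \<longleftrightarrow> (\<forall>r. 0 < r \<and> r < N \<longrightarrow> coeff x r = 0)"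

lemma gap_mono: "gap N x \<Longrightarrow> M \<le> N \<Longrightarrow> gap M x"
  by (auto simp: gap_def)

lemma gap_coeff: "gap N x \<Longrightarrow> 0 < r \<Longrightarrow> r < N \<Longrightarrow> coeff x r = 0"
  by (auto simp: gap_def)

lemma gap_1: "gap N (1 :: 'b::comm_semiring_1 poly)"
  by (auto simp: gap_def)

lemma coeff_mult_gap:
  fixes A B :: "'b::comm_semiring_1 poly"
  assumes "gap N A" "gap N B" "0 < n" "n \<le> N"
  shows "coeff (A * B) n = (if n = N then coeff A 0 * coeff B N + coeff A N * coeff B 0 else 0)"
proof -
  have "coeff (A * B) n = (\<Sum>i\<le>n. coeff A i * coeff B (n - i))" by (rule coeff_mult)
  also have "\<dots> = (\<Sum>i\<in>{0, n}. coeff A i * coeff B (n - i))"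
  proof (rule sum.mono_neutral_right)
    show "\<forall>i\<in>{..n} - {0, n}. coeff A i * coeff B (n - i) = 0"
      using assms by (auto simp: gap_def)
  qed auto
  also have "\<dots> = coeff A 0 * coeff B n + coeff A n * coeff B 0"
    using assms by simp
  finally show ?thesis
    using assms by (auto simp: gap_def)
qed

lemma gap_mult:
  fixes A B :: "'b::comm_semiring_1 poly"
  assumes "gap N A" "gap N B"
  shows "gap N (A * B)"
  using coeff_mult_gap[OF assms] unfolding gap_def by auto

lemma coeff_mult_gap_top:
  fixes A B :: "'b::comm_semiring_1 poly"
  assumes "gap N A" "gap N B" "0 < N"
  shows "coeff (A * B) N = coeff A 0 * coeff B N + coeff A N * coeff B 0"
  using coeff_mult_gap[OF assms(1,2) assms(3) order_refl] by simp

lemma gap_prod: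
  fixes f :: "'c \<Rightarrow> 'b::comm_semiring_1 poly"
  assumes "finite A" "\<forall>l\<in>A. gap N (f l)" "0 < N"
  shows "gap N (\<Prod>l\<in>A. f l) \<and>
    coeff (\<Prod>l\<in>A. f l) N = (\<Sum>l\<in>A. coeff (f l) N * (\<Prod>l'\<in>A - {l}. coeff (f l') 0))"
  using assms
proof (induction A rule: finite_induct)
  case empty
  then show ?case by (simp add: gap_1)
next
  case (insert x F)
  have IH: "gap N (\<Prod>l\<in>F. f l)"
    "coeff (\<Prod>l\<in>F. f l) N = (\<Sum>l\<in>F. coeff (f l) N * (\<Prod>l'\<in>F - {l}. coeff (f l') 0))"
    using insert by auto
  have gx: "gap N (f x)" using insert by auto
  have c0: "coeff (\<Prod>l\<in>F. f l) 0 = (\<Prod>l\<in>F. coeff (f l) 0)"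
    by (simp add: poly_prod flip: poly_0_coeff_0)
  have rest: "(\<Sum>l\<in>F. coeff (f l) N * (\<Prod>l'\<in>insert x F - {l}. coeff (f l') 0))
      = coeff (f x) 0 * (\<Sum>l\<in>F. coeff (f l) N * (\<Prod>l'\<in>F - {l}. coeff (f l') 0))"
    unfolding sum_distrib_left
  proof (rule sum.cong[OF refl])
    fix l assume "l \<in> F"
    hence "insert x F - {l} = insert x (F - {l})" using insert by auto
    thus "coeff (f l) N * (\<Prod>l'\<in>insert x F - {l}. coeff (f l') 0) =
        coeff (f x) 0 * (coeff (f l) N * (\<Prod>l'\<in>F - {l}. coeff (f l') 0))"
      using insert by (simp add: mult_ac)
  qed
  have "coeff (\<Prod>l\<in>insert x F. f l) N = coeff (f x * (\<Prod>l\<in>F. f l)) N"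
    using insert by simp
  also have "\<dots> = coeff (f x) 0 * coeff (\<Prod>l\<in>F. f l) N + coeff (f x) N * coeff (\<Prod>l\<in>F. f l) 0"
    by (rule coeff_mult_gap_top[OF gx IH(1) insert.prems(2)])
  also have "\<dots> = (\<Sum>l\<in>insert x F. coeff (f l) N * (\<Prod>l'\<in>insert x F - {l}. coeff (f l') 0))"
    by (simp only: sum.insert[OF insert(1,2)] Diff_insert_absorb[OF insert(2)] rest IH(2) c0
        add.commute)
  finally show ?case using gap_mult[OF gx IH(1)] insert by simp
qed

lemma gap_power:
  fixes A :: "'b::comm_semiring_1 poly"
  assumes "gap N A" "0 < N"
  shows "gap N (A ^ w) \<and> coeff (A ^ w) N = of_nat w * coeff A N * coeff A 0 ^ (w - 1)"
proof (induction w)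
  case 0
  then show ?case using assms by (simp add: gap_1)
next
  case (Suc w)
  have "coeff (A ^ Suc w) N = coeff A 0 * coeff (A ^ w) N + coeff A N * coeff (A ^ w) 0"
    using coeff_mult_gap_top[OF assms(1) conjunct1[OF Suc] assms(2)] by (simp only: power_Suc)
  also have "coeff A 0 * (of_nat w * coeff A N * coeff A 0 ^ (w - 1)) = of_nat w * coeff A N * coeff A 0 ^ w"
    by (cases w) (simp_all add: algebra_simps)
  hence "coeff A 0 * coeff (A ^ w) N + coeff A N * coeff (A ^ w) 0 = of_nat (Suc w) * coeff A N * coeff A 0 ^ w"
    using Suc by (simp add: coeff_0_power algebra_simps)
  finally show ?case using gap_mult[OF assms(1) conjunct1[OF Suc]] by simp
qed

lemma gap_frob:
  fixes x :: "'b::comm_ring_1 poly"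
  assumes "prime CHAR('b)" "P = CHAR('b) ^ q" "gap N x"
  shows "gap (N * P) (x ^ P)" "coeff (x ^ P) (N * P) = coeff x N ^ P"
proof -
  have P0: "P > 0" using assms prime_gt_0_nat by simp
  show "coeff (x ^ P) (N * P) = coeff x N ^ P" by (rule coeff_frob(1)[OF assms(1,2)])
  show "gap (N * P) (x ^ P)"
    unfolding gap_def
  proof (intro allI impI)
    fix r assume r: "0 < r \<and> r < N * P"
    show "coeff (x ^ P) r = 0"
    proof (cases "P dvd r")
      case True
      then obtain s where s: "r = s * P" by (auto simp: dvd_def mult.commute)
      with r P0 have "0 < s" "s < N" by auto
      hence "coeff x s = 0" using assms(3) by (simp add: gap_def)
      thus ?thesis using coeff_frob(1)[OF assms(1,2), of x s] s P0 by (simp add: power_0_left)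
    next
      case False
      thus ?thesis by (rule coeff_frob(2)[OF assms(1,2)])
    qed
  qed
qed

section \<open>The Dickson polynomial is additive\<close>

lemma poly_zero_by_roots:
  fixes K :: "'b::idom poly"
  assumes "\<forall>i\<ge>N. coeff K i = 0" "finite S" "card S \<ge> N" "\<forall>x\<in>S. poly K x = 0"
  shows "K = 0"
proof (rule ccontr)
  assume K: "K \<noteq> 0"
  hence "N > 0" using assms(1) by (metis leading_coeff_0_iff le0 neq0_conv)
  have "degree K < N"
  proof -
    have "degree K \<le> N - 1"
      by (rule degree_le) (use assms(1) \<open>N > 0\<close> in auto)
    thus ?thesis using \<open>N > 0\<close> by linarith
  qed
  moreover have "card S \<le> card {x. poly K x = 0}"
    by (rule card_mono) (use assms K poly_roots_finite in auto)
  moreover have "card {x. poly K x = 0} \<le> degree K"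
    by (rule card_poly_roots_bound[OF K])
  ultimately show False using assms(3) by linarith
qed

lemma poly_eq_by_roots:
  fixes L R :: "'b::idom poly"
  assumes "\<forall>i\<ge>N. coeff L i = coeff R i" "finite S" "card S \<ge> N" "\<forall>x\<in>S. poly L x = poly R x"
  shows "L = R"
  using poly_zero_by_roots[of N "L - R" S] assms by simp

definition lin_form :: "nat \<Rightarrow> (nat \<Rightarrow> 'a::comm_ring_1) \<Rightarrow> 'a mpoly" where
  "lin_form n cf = (\<Sum>i\<in>{1..n}. mconst (cf i) * Y i)"

definition span_y :: "nat \<Rightarrow> 'a::{comm_ring_1,finite} mpoly set" where
  "span_y n = lin_form n ` PiE {1..n} (\<lambda>_. UNIV)"

lemma dickson_poly_span: "dickson_poly n = (\<Prod>v\<in>span_y n. [: - v, 1 :])"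
  by (simp add: dickson_poly_def span_y_def lin_form_def)

lemma mconst_Y: "mconst c * Y i = Poly_Mapping.single (Poly_Mapping.single i 1) c"
  by (simp add: mconst_def Y_def mult_single)

lemma single1_eq_iff: "(a::'b::zero) \<noteq> 0 \<Longrightarrow> Poly_Mapping.single i a = Poly_Mapping.single j a \<longleftrightarrow> i = j"
  by (metis lookup_single_eq lookup_single_not_eq)

lemma lookup_lin_form:
  "Poly_Mapping.lookup (lin_form n cf) (Poly_Mapping.single j 1) = (if j \<in> {1..n} then cf j else 0)"
proof -
  have "Poly_Mapping.lookup (lin_form n cf) (Poly_Mapping.single j 1) =
      (\<Sum>i\<in>{1..n}. if i = j then cf i else 0)"
    by (simp add: lin_form_def lookup_sum mconst_Y lookup_single when_def single1_eq_iff)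
  thus ?thesis by (simp del: One_nat_def)
qed

lemma inj_lin_form: "inj_on (lin_form n) (PiE {1..n} (\<lambda>_. UNIV))"
proof (rule inj_onI)
  fix f g assume f: "f \<in> PiE {1..n} (\<lambda>_. UNIV)" and g: "g \<in> PiE {1..n} (\<lambda>_. UNIV)"
    and eq: "lin_form n f = lin_form n g"
  have "\<forall>j\<in>{1..n}. f j = g j"
    using arg_cong[OF eq, of "\<lambda>x. Poly_Mapping.lookup x (Poly_Mapping.single j 1)" for j]
    by (metis lookup_lin_form)
  thus "f = g" using f g by (metis PiE_ext)
qed

lemma finite_span_y: "finite (span_y n)"
  unfolding span_y_def by (intro finite_imageI finite_PiE) auto

lemma card_span_y: "card (span_y n :: 'a::{comm_ring_1,finite} mpoly set) = CARD('a) ^ n"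
  unfolding span_y_def by (subst card_image[OF inj_lin_form]) (simp add: card_PiE)

lemma dickson_poly_degree:
  "degree (dickson_poly n :: 'a::{field,finite} mpoly poly) = CARD('a) ^ n"
  "coeff (dickson_poly n :: 'a::{field,finite} mpoly poly) (CARD('a) ^ n) = 1"
proof -
  have d: "degree (dickson_poly n :: 'a mpoly poly) = CARD('a) ^ n"
    unfolding dickson_poly_span
    by (subst degree_prod_eq_sum_degree) (auto simp: card_span_y)
  thus "degree (dickson_poly n :: 'a mpoly poly) = CARD('a) ^ n" .
  have "lead_coeff (dickson_poly n :: 'a mpoly poly) = 1"
    unfolding dickson_poly_span lead_coeff_prod by simp
  thus "coeff (dickson_poly n :: 'a::{field,finite} mpoly poly) (CARD('a) ^ n) = 1"
    using d by simp
qed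

lemma dickson_poly_root: "v \<in> span_y n \<Longrightarrow> poly (dickson_poly n) v = 0"
  unfolding dickson_poly_span poly_prod by (rule prod_zero) (auto simp: finite_span_y)

lemma span_y_Suc:
  "span_y (Suc n) = (\<lambda>(c, w). w + mconst c * Y (Suc n)) ` (UNIV \<times> span_y n)"
proof
  show "span_y (Suc n) \<subseteq> (\<lambda>(c, w). w + mconst c * Y (Suc n)) ` (UNIV \<times> span_y n)"
  proof
    fix v assume "v \<in> span_y (Suc n)"
    then obtain cf where cf: "cf \<in> PiE {1..Suc n} (\<lambda>_. UNIV)" "v = lin_form (Suc n) cf"
      by (auto simp: span_y_def)
    let ?g = "restrict cf {1..n}"
    have g: "?g \<in> PiE {1..n} (\<lambda>_. UNIV)" by simp
    have "lin_form (Suc n) cf = lin_form n ?g + mconst (cf (Suc n)) * Y (Suc n)"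
      by (simp add: lin_form_def atLeastAtMostSuc_conv)
    moreover have "(cf (Suc n), lin_form n ?g) \<in> UNIV \<times> span_y n" using g by (simp add: span_y_def)
    ultimately show "v \<in> (\<lambda>(c, w). w + mconst c * Y (Suc n)) ` (UNIV \<times> span_y n)"
      using cf by (intro rev_image_eqI[of "(cf (Suc n), lin_form n ?g)"]) auto
  qed
next
  show "(\<lambda>(c, w). w + mconst c * Y (Suc n)) ` (UNIV \<times> span_y n) \<subseteq> span_y (Suc n)"
  proof
    fix v assume "v \<in> (\<lambda>(c, w). w + mconst c * Y (Suc n)) ` (UNIV \<times> span_y n)"
    then obtain c w where v: "v = w + mconst c * Y (Suc n)" and "w \<in> span_y n" by auto
    then obtain cf where cf: "cf \<in> PiE {1..n} (\<lambda>_. UNIV)" "w = lin_form n cf"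
      by (auto simp: span_y_def)
    let ?g = "cf(Suc n := c)"
    have g: "?g \<in> PiE {1..Suc n} (\<lambda>_. UNIV)" using cf(1) by (auto simp: PiE_def extensional_def)
    have "lin_form (Suc n) ?g = lin_form n cf + mconst c * Y (Suc n)"
      by (simp add: lin_form_def atLeastAtMostSuc_conv)
    thus "v \<in> span_y (Suc n)"
      using cf g v unfolding span_y_def by (intro rev_image_eqI[of ?g]) auto
  qed
qed

lemma inj_span_y_Suc:
  "inj_on (\<lambda>(c, w). w + mconst c * Y (Suc n)) (UNIV \<times> (span_y n :: 'a::{comm_ring_1,finite} mpoly set))"
proof (rule inj_onI, clarify)
  fix c c' :: 'a and w w' :: "'a mpoly"
  assume w: "w \<in> span_y n" "w' \<in> span_y n" and eq: "w + mconst c * Y (Suc n) = w' + mconst c' * Y (Suc n)"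
  have z: "Poly_Mapping.lookup u (Poly_Mapping.single (Suc n) 1) = 0" if "u \<in> span_y n" for u :: "'a mpoly"
    using that lookup_lin_form[of n _ "Suc n"] by (auto simp: span_y_def)
  have "c = c'"
    using arg_cong[OF eq, of "\<lambda>x. Poly_Mapping.lookup x (Poly_Mapping.single (Suc n) 1)"] z[OF w(1)] z[OF w(2)]
    by (simp add: lookup_add mconst_Y lookup_single)
  with eq show "c = c' \<and> w = w'" by simp
qed

lemma dickson_poly_Suc:
  "dickson_poly (Suc n) = (\<Prod>c\<in>(UNIV::'a::{comm_ring_1,finite} set).
      pcompose (dickson_poly n) [: - (mconst c * Y (Suc n)), 1 :])"
proof -
  have "dickson_poly (Suc n) =
      (\<Prod>x\<in>UNIV \<times> span_y n. [: - (snd x + mconst (fst x) * Y (Suc n)), 1 :] :: 'a mpoly poly)"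
    unfolding dickson_poly_span span_y_Suc
    by (subst prod.reindex[OF inj_span_y_Suc]) (simp add: case_prod_beta)
  also have "\<dots> = (\<Prod>c\<in>UNIV. \<Prod>w\<in>span_y n. [: - (w + mconst c * Y (Suc n)), 1 :])"
    by (simp add: prod.cartesian_product case_prod_beta)
  also have "\<dots> = (\<Prod>c\<in>(UNIV::'a set). pcompose (dickson_poly n) [: - (mconst c * Y (Suc n)), 1 :])"
    unfolding dickson_poly_span pcompose_prod
    by (intro prod.cong refl) (simp add: pcompose_pCons)
  finally show ?thesis .
qed

text \<open>A q-polynomial has nonzero coefficients only in degrees q^e; in characteristic q = p it
  is an additive function.\<close>
definition q_poly :: "nat \<Rightarrow> 'b::zero poly \<Rightarrow> bool" where
  "q_poly q F \<longleftrightarrow> (\<forall>m. coeff F m \<noteq> 0 \<longrightarrow> (\<exists>e. m = q ^ e))"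

lemma q_poly_diff: "q_poly q F \<Longrightarrow> q_poly q G \<Longrightarrow> q_poly q (F - (G :: 'b::ab_group_add poly))"
  unfolding q_poly_def coeff_diff by (metis diff_zero)

lemma q_poly_smult: "q_poly q F \<Longrightarrow> q_poly q (smult c (F :: 'b::comm_semiring_0 poly))"
  unfolding q_poly_def coeff_smult by (metis mult_zero_right)

lemma q_poly_frob:
  fixes F :: "'b::comm_ring_1 poly"
  assumes "prime CHAR('b)" "q_poly CHAR('b) F"
  shows "q_poly CHAR('b) (F ^ CHAR('b))"
  unfolding q_poly_def
proof (intro allI impI)
  fix m assume m: "coeff (F ^ CHAR('b)) m \<noteq> 0"
  have "CHAR('b) dvd m"
    using coeff_frob(2)[OF assms(1), of "CHAR('b)" 1] m by auto
  then obtain r where r: "m = r * CHAR('b)" by (auto simp: dvd_def mult.commute)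
  have "coeff F r ^ CHAR('b) \<noteq> 0"
    using coeff_frob(1)[OF assms(1), of "CHAR('b)" 1 F r] m r by simp
  hence "coeff F r \<noteq> 0" using prime_gt_0_nat[OF assms(1)] by (auto simp: power_0_left)
  then obtain e where "r = CHAR('b) ^ e" using assms(2) by (auto simp: q_poly_def)
  thus "\<exists>e. m = CHAR('b) ^ e" using r by (intro exI[of _ "Suc e"]) simp
qed

lemma pcompose_power: "pcompose (p ^ k) r = (pcompose p r) ^ k"
  for p r :: "'b::comm_semiring_1 poly"
  by (induction k) (simp_all add: pcompose_mult pcompose_1)

lemma pcompose_monom: "pcompose (monom c k) r = smult c (r ^ k)"
  for r :: "'b::comm_semiring_1 poly"
proof -
  have "monom c k = smult c ([:0,1:] ^ k)" by (simp add: monom_altdef)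
  thus ?thesis by (simp add: pcompose_smult pcompose_power pcompose_pCons)
qed

lemma const_sum: "[: sum f A :] = (\<Sum>x\<in>A. [: f x :])"
proof (induction A rule: infinite_finite_induct)
  case (insert x F)
  have "[: f x + sum f F :] = [: f x :] + [: sum f F :]" by simp
  thus ?case using insert by simp
qed simp_all

lemma pcompose_q_poly:
  fixes F :: "'b::comm_ring_1 poly"
  assumes "prime CHAR('b)" "q_poly CHAR('b) F"
  shows "pcompose F [: b, 1 :] = F + [: poly F b :]"
proof -
  have trm: "smult (coeff F m) ([: b, 1 :] ^ m) = [: coeff F m * b ^ m :] + monom (coeff F m) m" for m
  proof (cases "coeff F m = 0")
    case False
    then obtain e where e: "m = CHAR('b) ^ e" using assms(2) by (auto simp: q_poly_def)
    have "[: b, 1 :] = [: b :] + monom 1 1" by (simp add: monom_altdef)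
    hence "[: b, 1 :] ^ m = [: b :] ^ m + monom 1 1 ^ m"
      using freshmans_dream'[where 'a="'b poly", of m e] assms(1) e by simp
    thus ?thesis by (simp add: monom_power poly_const_pow smult_add_right smult_monom)
  qed simp
  have "pcompose F [: b, 1 :] = pcompose (\<Sum>m\<le>degree F. monom (coeff F m) m) [: b, 1 :]"
    by (simp add: poly_as_sum_of_monoms)
  also have "\<dots> = (\<Sum>m\<le>degree F. [: coeff F m * b ^ m :] + monom (coeff F m) m)"
    by (simp add: pcompose_sum pcompose_monom trm)
  also have "\<dots> = [: poly F b :] + F"
    by (simp add: sum.distrib poly_altdef const_sum poly_as_sum_of_monoms)
  finally show ?thesis by simp
qed

context
  assumes p_prime: "prime CARD('a::{field,finite})"
begin

lemma CHAR_mpoly_card: "CHAR('a mpoly) = CARD('a)"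
  by (simp add: CHAR_mpoly CHAR_eq_card[OF p_prime])

lemma prime_CHAR_mpoly: "prime CHAR('a mpoly)"
  by (simp add: CHAR_mpoly_card p_prime)

lemma card_ge_2: "CARD('a) \<ge> 2"
  using p_prime prime_ge_2_nat by blast

lemma poly_q_poly_scale:
  fixes F :: "'a mpoly poly"
  assumes "q_poly CARD('a) F"
  shows "poly F (mconst c * x) = mconst c * poly F x"
proof -
  have t: "coeff F m * (mconst c * x) ^ m = mconst c * (coeff F m * x ^ m)" for m
  proof (cases "coeff F m = 0")
    case False
    then obtain e where e: "m = CARD('a) ^ e" using assms by (auto simp: q_poly_def)
    have "mconst c ^ m = mconst c"
      by (simp add: e prime_field_power_card_pow[OF p_prime] flip: mconst_power)
    thus ?thesis by (simp add: power_mult_distrib mult_ac)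
  qed simp
  show ?thesis by (simp only: poly_altdef sum_distrib_left t)
qed

text \<open>Every multiple c b (c in F_p) is a root of X^p - b^(p-1) X, since (c b)^p = c b^p.\<close>
lemma scalar_multiple_root:
  "poly (monom 1 CARD('a) - monom (b ^ (CARD('a) - 1)) 1) (mconst c * b :: 'a mpoly) = 0"
proof -
  have "b ^ (CARD('a) - 1) * b = b ^ CARD('a)"
    using card_ge_2 by (simp flip: power_Suc2)
  moreover have "(mconst c * b) ^ CARD('a) = mconst c * b ^ CARD('a)"
    by (simp add: power_mult_distrib prime_field_power_card[OF p_prime] flip: mconst_power)
  ultimately show ?thesis by (simp add: poly_monom mult_ac)
qed

text \<open>prod_c (X - c b) = X^p - b^(p-1) X: for b nonzero both sides are monic of degree p and
  vanish at the p distinct points c b.\<close>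
lemma prod_scalar_multiples:
  fixes b :: "'a mpoly"
  shows "(\<Prod>c\<in>(UNIV::'a set). [: - (mconst c * b), 1 :]) = monom 1 CARD('a) - monom (b ^ (CARD('a) - 1)) 1"
proof (cases "b = 0")
  case True
  have "b ^ (CARD('a) - 1) = 0" using True card_ge_2 by simp
  thus ?thesis using True by (simp add: monom_altdef)
next
  case False
  let ?L = "(\<Prod>c\<in>(UNIV::'a set). [: - (mconst c * b), 1 :])"
  have dL: "degree ?L = CARD('a)"
    by (subst degree_prod_eq_sum_degree) auto
  have lL: "coeff ?L CARD('a) = 1"
    using lead_coeff_prod[of "\<lambda>c. [: - (mconst c * b), 1 :]" UNIV] dL by simp
  have inj: "inj (\<lambda>c. mconst c * b)"
  proof (rule injI)
    fix c c' assume "mconst c * b = mconst c' * b"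
    hence "mconst (c - c') * b = 0" by (simp add: mconst_diff algebra_simps)
    thus "c = c'" using False by simp
  qed
  show ?thesis
  proof (rule poly_eq_by_roots[of "CARD('a)" _ _ "(\<lambda>c. mconst c * b) ` UNIV"])
    show "\<forall>i\<ge>CARD('a). coeff ?L i = coeff (monom 1 CARD('a) - monom (b ^ (CARD('a) - 1)) 1) i"
    proof (intro allI impI)
      fix i assume "CARD('a) \<le> i"
      thus "coeff ?L i = coeff (monom 1 CARD('a) - monom (b ^ (CARD('a) - 1)) 1) i"
        using dL lL card_ge_2 by (cases "i = CARD('a)") (auto simp: coeff_eq_0)
    qed
    show "finite ((\<lambda>c. mconst c * b) ` (UNIV::'a set))" by simp
    show "CARD('a) \<le> card ((\<lambda>c. mconst c * b) ` (UNIV::'a set))"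
      using inj by (simp add: card_image)
    show "\<forall>x\<in>(\<lambda>c. mconst c * b) ` UNIV. poly ?L x = poly (monom 1 CARD('a) - monom (b ^ (CARD('a) - 1)) 1) x"
    proof clarify
      fix c0 :: 'a
      have "poly ?L (mconst c0 * b) = 0"
        unfolding poly_prod by (rule prod_zero) (auto intro!: bexI[of _ c0])
      thus "poly ?L (mconst c0 * b) = poly (monom 1 CARD('a) - monom (b ^ (CARD('a) - 1)) 1) (mconst c0 * b)"
        by (simp only: scalar_multiple_root)
    qed
  qed
qed

lemma dickson_poly_0: "(dickson_poly 0 :: 'a mpoly poly) = [: 0, 1 :]"
proof -
  have "span_y 0 = {0 :: 'a mpoly}" by (simp add: span_y_def lin_form_def)
  thus ?thesis by (simp add: dickson_poly_span)
qed

lemma dickson_poly_Suc_rec: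
  assumes "q_poly CARD('a) (dickson_poly n :: 'a mpoly poly)"
  shows "(dickson_poly (Suc n) :: 'a mpoly poly) =
    dickson_poly n ^ CARD('a) - smult (poly (dickson_poly n) (Y (Suc n)) ^ (CARD('a) - 1)) (dickson_poly n)"
proof -
  let ?F = "dickson_poly n :: 'a mpoly poly"
  let ?b = "poly ?F (Y (Suc n))"
  have A: "q_poly CHAR('a mpoly) ?F" using assms by (simp add: CHAR_mpoly_card)
  have "dickson_poly (Suc n) = (\<Prod>c\<in>(UNIV::'a set). pcompose ?F [: - (mconst c * Y (Suc n)), 1 :])"
    by (rule dickson_poly_Suc)
  also have "\<dots> = (\<Prod>c\<in>(UNIV::'a set). pcompose [: - (mconst c * ?b), 1 :] ?F)"
  proof (rule prod.cong[OF refl])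
    fix c :: 'a
    have "poly ?F (- (mconst c * Y (Suc n))) = - (mconst c * ?b)"
      using poly_q_poly_scale[OF assms, of "- c" "Y (Suc n)"] by (simp add: mconst_uminus)
    thus "pcompose ?F [: - (mconst c * Y (Suc n)), 1 :] = pcompose [: - (mconst c * ?b), 1 :] ?F"
      by (simp add: pcompose_q_poly[OF prime_CHAR_mpoly A] pcompose_pCons)
  qed
  also have "\<dots> = pcompose (\<Prod>c\<in>(UNIV::'a set). [: - (mconst c * ?b), 1 :]) ?F"
    by (simp add: pcompose_prod)
  also have "\<dots> = ?F ^ CARD('a) - smult (?b ^ (CARD('a) - 1)) ?F"
    by (simp add: prod_scalar_multiples pcompose_diff pcompose_monom)
  finally show ?thesis .
qed

lemma q_poly_dickson_poly: "q_poly CARD('a) (dickson_poly n :: 'a mpoly poly)"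
proof (induction n)
  case 0
  show ?case by (auto simp: dickson_poly_0 q_poly_def coeff_pCons split: nat.splits intro: exI[of _ 0])
next
  case (Suc n)
  have "q_poly CARD('a) ((dickson_poly n :: 'a mpoly poly) ^ CARD('a))"
    using q_poly_frob[OF prime_CHAR_mpoly, of "dickson_poly n :: 'a mpoly poly"] Suc
    by (simp add: CHAR_mpoly_card)
  thus ?case using Suc by (simp add: dickson_poly_Suc_rec q_poly_diff q_poly_smult)
qed

lemma card_power_less: "x < y \<Longrightarrow> CARD('a) ^ x < CARD('a) ^ y"
  using card_ge_2 by (simp add: power_strict_increasing)

text \<open>P_t v = v + t v^p for every v in the span, because v is F_p-linear in the y_i.\<close>
lemma totalP_span_y:
  assumes "(v::'a mpoly) \<in> span_y n"
  shows "totalP v = [: v :] + monom (v ^ CARD('a)) 1"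
proof -
  obtain cf where v: "v = (\<Sum>i\<in>{1..n}. mconst (cf i) * Y i)"
    using assms by (auto simp: span_y_def lin_form_def)
  have "v ^ CARD('a) = (\<Sum>i\<in>{1..n}. (mconst (cf i) * Y i) ^ CARD('a))"
    unfolding v
    by (rule freshmans_dream_sum) (simp_all add: prime_CHAR_mpoly CHAR_mpoly_card p_prime)
  also have "\<dots> = (\<Sum>i\<in>{1..n}. mconst (cf i) * Y i ^ CARD('a))"
    by (simp add: power_mult_distrib prime_field_power_card[OF p_prime] flip: mconst_power)
  finally have vp: "v ^ CARD('a) = (\<Sum>i\<in>{1..n}. mconst (cf i) * Y i ^ CARD('a))" .
  have "totalP v = (\<Sum>i\<in>{1..n}. [: mconst (cf i) :] * [: Y i, Y i ^ CARD('a) :])"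
    by (simp add: v totalP_sum totalP_mult totalP_mconst totalP_Y)
  also have "\<dots> = (\<Sum>i\<in>{1..n}. [: mconst (cf i) * Y i :] + monom (mconst (cf i) * Y i ^ CARD('a)) 1)"
    by (intro sum.cong refl) (simp add: monom_Suc monom_0 algebra_simps smult_monom)
  also have "\<dots> = [: v :] + monom (v ^ CARD('a)) 1"
    unfolding vp by (simp only: sum.distrib const_sum monom_sum v)
  finally show ?thesis .
qed

end

section \<open>The total reduced power of the Dickson invariants\<close>

definition qsum :: "nat \<Rightarrow> nat \<Rightarrow> (nat \<Rightarrow> 'b::comm_semiring_1) \<Rightarrow> 'b poly" where
  "qsum q N a = (\<Sum>e\<le>N. monom (a e) (q ^ e))"

lemma coeff_qsum_power:
  assumes "q \<ge> 2"
  shows "coeff (qsum q N a) (q ^ k) = (if k \<le> N then a k else 0)"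
proof -
  have "coeff (qsum q N a) (q ^ k) = (\<Sum>e\<le>N. if e = k then a e else 0)"
    unfolding qsum_def coeff_sum using assms by (intro sum.cong refl) simp
  thus ?thesis by simp
qed

lemma coeff_qsum_other: "\<forall>k. m \<noteq> q ^ k \<Longrightarrow> coeff (qsum q N a) m = 0"
  unfolding qsum_def coeff_sum by (intro sum.neutral) auto

lemma qsum_diff: "qsum q N a - qsum q N b = qsum q N (\<lambda>e. a e - b e :: 'b::comm_ring_1)"
  unfolding qsum_def sum_subtractf[symmetric] diff_monom ..

lemma smult_qsum: "smult c (qsum q N a) = qsum q N (\<lambda>e. c * a e)"
  unfolding qsum_def by (induction N) (simp_all add: smult_add_right smult_monom)

lemma poly_qsum: "poly (qsum q N a) x = (\<Sum>e\<le>N. a e * x ^ (q ^ e))"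
  by (simp add: qsum_def poly_sum poly_monom)

abbreviation tpow :: "nat \<Rightarrow> 'a::comm_ring_1 mpoly poly" where
  "tpow k \<equiv> monom 1 k"

lemma coeff_tpow_mult: "coeff (tpow k * x) r = (if r < k then 0 else coeff x (r - k))"
  by (simp add: coeff_monom_mult)

text \<open>Fix n. Write F_n = sum_(e <= n) c_e X^(p^e) (dcoeff) and C_e = P_t c_e (total_dcoeff).\<close>
context
  fixes n :: nat
  assumes p_prime: "prime CARD('a::{field,finite})"
begin

definition dcoeff :: "nat \<Rightarrow> 'a mpoly" where
  "dcoeff e = coeff (dickson_poly n) (CARD('a) ^ e)"

definition total_dcoeff :: "nat \<Rightarrow> 'a mpoly poly" where
  "total_dcoeff e = totalP (dcoeff e)"

lemma dcoeff_top: "dcoeff n = 1"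
  using dickson_poly_degree(2)[where 'a='a] by (simp add: dcoeff_def)

lemma total_dcoeff_top: "total_dcoeff n = 1"
  by (simp add: total_dcoeff_def dcoeff_top)

lemma coeff0_total_dcoeff: "coeff (total_dcoeff e) 0 = dcoeff e"
  by (simp add: total_dcoeff_def totalP_coeff0)

lemma dickson_poly_qsum: "dickson_poly n = qsum CARD('a) n dcoeff"
proof (rule poly_eqI)
  fix m
  have p2: "CARD('a) \<ge> 2" by (rule card_ge_2[OF p_prime])
  show "coeff (dickson_poly n) m = coeff (qsum CARD('a) n dcoeff) m"
  proof (cases "\<exists>k. m = CARD('a) ^ k")
    case True
    then obtain k where k: "m = CARD('a) ^ k" by auto
    show ?thesis
    proof (cases "k \<le> n")
      case True thus ?thesis using k p2 by (simp add: coeff_qsum_power dcoeff_def)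
    next
      case False
      hence "degree (dickson_poly n :: 'a mpoly poly) < m"
        using k card_power_less[OF p_prime] by (simp add: dickson_poly_degree)
      thus ?thesis using False k p2 by (simp add: coeff_qsum_power coeff_eq_0)
    qed
  next
    case False
    hence "coeff (dickson_poly n :: 'a mpoly poly) m = 0"
      using q_poly_dickson_poly[OF p_prime, of n] by (auto simp: q_poly_def)
    thus ?thesis using False by (simp add: coeff_qsum_other)
  qed
qed

lemma poly_dickson_poly: "poly (dickson_poly n) (v::'a mpoly) = (\<Sum>e\<le>n. dcoeff e * v ^ (CARD('a) ^ e))"
  by (simp add: dickson_poly_qsum poly_qsum)

text \<open>Three q-polynomials of degree p^(n+1) over the coefficient ring of P_t:
  H(X) = sum_e C_e (X + t X^p)^(p^e), whose coefficients are C_e + C_(e-1) t^(p^(e-1));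
  F_n(X), with constant coefficients c_e; and F_n(X)^p, with coefficients c_(e-1)^p.\<close>
definition shifted_coeff :: "nat \<Rightarrow> 'a mpoly poly" where
  "shifted_coeff e = (if e \<le> n then total_dcoeff e else 0) +
     (if 0 < e then total_dcoeff (e - 1) * tpow (CARD('a) ^ (e - 1)) else 0)"

definition const_coeff :: "nat \<Rightarrow> 'a mpoly poly" where
  "const_coeff e = (if e \<le> n then [: dcoeff e :] else 0)"

definition frob_coeff :: "nat \<Rightarrow> 'a mpoly poly" where
  "frob_coeff e = (if 0 < e then [: dcoeff (e - 1) :] ^ CARD('a) else 0)"

lemma const_coeff_root: "v \<in> span_y n \<Longrightarrow> poly (qsum CARD('a) (Suc n) const_coeff) [: v :] = 0"
proof -
  assume v: "v \<in> span_y n"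
  have "poly (qsum CARD('a) (Suc n) const_coeff) [: v :] = (\<Sum>e\<le>n. [: dcoeff e :] * [: v ^ (CARD('a) ^ e) :])"
    unfolding poly_qsum const_coeff_def by (subst sum.atMost_Suc) (simp add: poly_const_pow)
  also have "\<dots> = [: poly (dickson_poly n) v :]"
    unfolding poly_dickson_poly const_sum by (intro sum.cong refl) simp
  finally show ?thesis using dickson_poly_root[OF v] by simp
qed

lemma frob_coeff_qsum: "qsum CARD('a) (Suc n) const_coeff ^ CARD('a) = qsum CARD('a) (Suc n) frob_coeff"
proof -
  have "qsum CARD('a) (Suc n) const_coeff ^ CARD('a) =
      (\<Sum>e\<le>Suc n. monom (const_coeff e) (CARD('a) ^ e) ^ CARD('a))"
    unfolding qsum_def
    by (rule freshmans_dream_sum) (simp_all add: prime_CHAR_mpoly[OF p_prime] CHAR_mpoly_card[OF p_prime] p_prime)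
  also have "\<dots> = (\<Sum>e\<le>Suc n. monom (const_coeff e ^ CARD('a)) (CARD('a) ^ Suc e))"
    by (simp add: monom_power mult.commute)
  also have "\<dots> = (\<Sum>e\<le>n. monom ([: dcoeff e :] ^ CARD('a)) (CARD('a) ^ Suc e))"
    using card_ge_2[OF p_prime] by (subst sum.atMost_Suc) (simp add: const_coeff_def)
  also have "\<dots> = qsum CARD('a) (Suc n) frob_coeff"
    unfolding qsum_def by (subst sum.atMost_Suc_shift) (simp add: frob_coeff_def)
  finally show ?thesis .
qed

text \<open>H vanishes on the span: H(v) = P_t (F_n(v)) = 0, using P_t v = v + t v^p.\<close>
lemma shifted_coeff_root: "v \<in> span_y n \<Longrightarrow> poly (qsum CARD('a) (Suc n) shifted_coeff) [: v :] = 0"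
proof -
  assume v: "v \<in> span_y n"
  let ?w = "\<lambda>e. [: v ^ (CARD('a) ^ e) :]"
  have tp: "totalP v ^ (CARD('a) ^ e) = ?w e + tpow (CARD('a) ^ e) * ?w (Suc e)" for e
  proof -
    have "totalP v ^ (CARD('a) ^ e) = [: v :] ^ (CARD('a) ^ e) + monom (v ^ CARD('a)) 1 ^ (CARD('a) ^ e)"
      unfolding totalP_span_y[OF p_prime v]
      by (rule freshmans_dream') (simp_all add: prime_CHAR_mpoly[OF p_prime] CHAR_mpoly_card[OF p_prime] p_prime)
    moreover have "(v ^ CARD('a)) ^ (CARD('a) ^ e) = v ^ (CARD('a) ^ Suc e)"
      by (simp only: power_Suc power_mult)
    ultimately show ?thesis
      by (simp add: poly_const_pow monom_power smult_monom mult_monom flip: monom_0)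
  qed
  have "totalP (poly (dickson_poly n) v) = (\<Sum>e\<le>n. total_dcoeff e * totalP v ^ (CARD('a) ^ e))"
    by (simp add: poly_dickson_poly totalP_sum totalP_mult totalP_power total_dcoeff_def)
  hence z: "(\<Sum>e\<le>n. total_dcoeff e * totalP v ^ (CARD('a) ^ e)) = 0"
    using dickson_poly_root[OF v] by simp
  have "poly (qsum CARD('a) (Suc n) shifted_coeff) [: v :] = (\<Sum>e\<le>Suc n. shifted_coeff e * ?w e)"
    unfolding poly_qsum poly_const_pow ..
  also have "\<dots> = (\<Sum>e\<le>Suc n. (if e \<le> n then total_dcoeff e else 0) * ?w e) +
      (\<Sum>e\<le>Suc n. (if 0 < e then total_dcoeff (e - 1) * tpow (CARD('a) ^ (e - 1)) else 0) * ?w e)"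
    unfolding shifted_coeff_def distrib_right sum.distrib ..
  also have "(\<Sum>e\<le>Suc n. (if e \<le> n then total_dcoeff e else 0) * ?w e) = (\<Sum>e\<le>n. total_dcoeff e * ?w e)"
    by (simp only: sum.atMost_Suc) simp
  also have "(\<Sum>e\<le>Suc n. (if 0 < e then total_dcoeff (e - 1) * tpow (CARD('a) ^ (e - 1)) else 0) * ?w e)
      = (\<Sum>e\<le>n. total_dcoeff e * (tpow (CARD('a) ^ e) * ?w (Suc e)))"
    by (simp only: sum.atMost_Suc_shift) (simp add: mult.assoc)
  also have "(\<Sum>e\<le>n. total_dcoeff e * ?w e) + (\<Sum>e\<le>n. total_dcoeff e * (tpow (CARD('a) ^ e) * ?w (Suc e)))
      = (\<Sum>e\<le>n. total_dcoeff e * totalP v ^ (CARD('a) ^ e))"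
    unfolding tp distrib_left sum.distrib ..
  finally show ?thesis using z by simp
qed

text \<open>The coefficient beta for which H = t^(p^n) F_n^p + beta F_n will hold (it is chosen to make
  the X^(p^n) terms agree).\<close>
definition beta :: "'a mpoly poly" where
  "beta = shifted_coeff n - tpow (CARD('a) ^ n) * frob_coeff n"

text \<open>The comparison polynomial H - t^(p^n) F_n^p - beta F_n; it will turn out to be zero.\<close>
definition defect :: "'a mpoly poly poly" where
  "defect = qsum CARD('a) (Suc n) (\<lambda>e. shifted_coeff e - tpow (CARD('a) ^ n) * frob_coeff e - beta * const_coeff e)"

lemma defect_alt: "defect = qsum CARD('a) (Suc n) shifted_coeff
    - smult (tpow (CARD('a) ^ n)) (qsum CARD('a) (Suc n) const_coeff ^ CARD('a))
    - smult beta (qsum CARD('a) (Suc n) const_coeff)"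
  unfolding defect_def frob_coeff_qsum smult_qsum qsum_diff ..

text \<open>The top coefficients cancel: at X^(p^(n+1)) because C_n = c_n = 1, at X^(p^n) by the choice
  of beta.\<close>
lemma defect_coeff_high:
  assumes "CARD('a) ^ n \<le> i"
  shows "coeff defect i = 0"
proof (cases "\<exists>k. i = CARD('a) ^ k")
  case True
  have p2: "CARD('a) \<ge> 2" by (rule card_ge_2[OF p_prime])
  then obtain k where k: "i = CARD('a) ^ k" using True by auto
  hence "n \<le> k" using assms p2 by (metis power_le_imp_le_exp Suc_1 Suc_le_eq)
  then consider "k = n" | "k = Suc n" | "Suc n < k" by linarith
  thus ?thesis
  proof cases
    case 1 thus ?thesis unfolding k defect_def coeff_qsum_power[OF p2]
      by (simp add: beta_def const_coeff_def dcoeff_top)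
  next
    case 2 thus ?thesis unfolding k defect_def coeff_qsum_power[OF p2]
      by (simp add: const_coeff_def frob_coeff_def shifted_coeff_def total_dcoeff_top dcoeff_top pCons_one)
  next
    case 3 thus ?thesis unfolding k defect_def coeff_qsum_power[OF p2] by simp
  qed
qed (simp add: defect_def coeff_qsum_other)

text \<open>Having degree below p^n and vanishing at the p^n points of the span, the defect is zero.\<close>
lemma defect_eq_0: "defect = 0"
proof (rule poly_zero_by_roots[of "CARD('a) ^ n" _ "(\<lambda>v. [: v :]) ` (span_y n :: 'a mpoly set)"])
  show "\<forall>i\<ge>CARD('a) ^ n. coeff defect i = 0" using defect_coeff_high by blast
  show "finite ((\<lambda>v. [: v :]) ` (span_y n :: 'a mpoly set))" by (simp add: finite_span_y)
  have "inj_on (\<lambda>v. [: v :]) (span_y n :: 'a mpoly set)" by (auto intro: inj_onI)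
  thus "CARD('a) ^ n \<le> card ((\<lambda>v. [: v :]) ` (span_y n :: 'a mpoly set))"
    by (simp add: card_image card_span_y)
  show "\<forall>x\<in>(\<lambda>v. [: v :]) ` (span_y n :: 'a mpoly set). poly defect x = 0"
    using shifted_coeff_root const_coeff_root by (auto simp: defect_alt)
qed

lemma shifted_coeff_eq:
  assumes "e \<le> Suc n"
  shows "shifted_coeff e = tpow (CARD('a) ^ n) * frob_coeff e + beta * const_coeff e"
proof -
  have "coeff defect (CARD('a) ^ e) = 0" by (simp add: defect_eq_0)
  thus ?thesis using assms card_ge_2[OF p_prime] by (simp add: defect_def coeff_qsum_power algebra_simps)
qed

lemma total_dcoeff_0: "total_dcoeff 0 = beta * [: dcoeff 0 :]"
  using shifted_coeff_eq[of 0] by (simp add: shifted_coeff_def const_coeff_def frob_coeff_def)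

lemma total_dcoeff_step:
  "0 < e \<Longrightarrow> e \<le> n \<Longrightarrow> total_dcoeff e = beta * [: dcoeff e :]
     + tpow (CARD('a) ^ n) * [: dcoeff (e - 1) :] ^ CARD('a) - total_dcoeff (e - 1) * tpow (CARD('a) ^ (e - 1))"
  using shifted_coeff_eq[of e] by (simp add: shifted_coeff_def const_coeff_def frob_coeff_def algebra_simps)

context
  assumes n1: "1 \<le> n"
begin

lemma beta_eq:
  "beta = 1 + total_dcoeff (n - 1) * tpow (CARD('a) ^ (n - 1)) - tpow (CARD('a) ^ n) * [: dcoeff (n - 1) :] ^ CARD('a)"
  using total_dcoeff_step[of n] n1 by (simp add: total_dcoeff_top dcoeff_top algebra_simps)

lemma beta_coeff:
  "coeff beta 0 = 1"
  "0 < r \<Longrightarrow> r < CARD('a) ^ (n - 1) \<Longrightarrow> coeff beta r = 0"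
  "coeff beta (CARD('a) ^ (n - 1)) = dcoeff (n - 1)"
proof -
  have pp: "CARD('a) ^ (n - 1) < CARD('a) ^ n" using n1 by (intro card_power_less[OF p_prime]) simp
  have p0: "0 < CARD('a) ^ (n - 1)" using card_ge_2[OF p_prime] by simp
  have cb: "coeff beta r = coeff 1 r
     + (if r < CARD('a) ^ (n - 1) then 0 else coeff (total_dcoeff (n - 1)) (r - CARD('a) ^ (n - 1)))
     - (if r < CARD('a) ^ n then 0 else coeff ([: dcoeff (n - 1) :] ^ CARD('a)) (r - CARD('a) ^ n))" for r
    unfolding beta_eq by (simp add: coeff_tpow_mult mult.commute[of "total_dcoeff _"])
  show "coeff beta 0 = 1" using p0 pp by (simp add: cb)
  show "0 < r \<Longrightarrow> r < CARD('a) ^ (n - 1) \<Longrightarrow> coeff beta r = 0" using pp by (simp add: cb)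
  show "coeff beta (CARD('a) ^ (n - 1)) = dcoeff (n - 1)"
    using pp p0 by (simp add: cb coeff0_total_dcoeff)
qed

lemma total_dcoeff_0_coeff:
  "0 < r \<Longrightarrow> r < CARD('a) ^ (n - 1) \<Longrightarrow> coeff (total_dcoeff 0) r = 0"
  "coeff (total_dcoeff 0) (CARD('a) ^ (n - 1)) = dcoeff (n - 1) * dcoeff 0"
  using beta_coeff by (simp_all add: total_dcoeff_0)

lemma total_dcoeff_coeff:
  assumes "0 < e" "e < n"
  shows "0 < r \<Longrightarrow> r < CARD('a) ^ (e - 1) \<Longrightarrow> coeff (total_dcoeff e) r = 0"
    and "coeff (total_dcoeff e) (CARD('a) ^ (e - 1)) = - dcoeff (e - 1)"
proof -
  have a: "CARD('a) ^ (e - 1) < CARD('a) ^ (n - 1)" using assms by (intro card_power_less[OF p_prime]) simp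
  have b: "CARD('a) ^ (n - 1) < CARD('a) ^ n" using n1 by (intro card_power_less[OF p_prime]) simp
  have c: "coeff (total_dcoeff e) r = coeff beta r * dcoeff e
      + (if r < CARD('a) ^ n then 0 else coeff ([: dcoeff (e - 1) :] ^ CARD('a)) (r - CARD('a) ^ n))
      - (if r < CARD('a) ^ (e - 1) then 0 else coeff (total_dcoeff (e - 1)) (r - CARD('a) ^ (e - 1)))" for r
    using total_dcoeff_step[of e] assms by (simp add: coeff_tpow_mult mult.commute[of "total_dcoeff _"])
  show "0 < r \<Longrightarrow> r < CARD('a) ^ (e - 1) \<Longrightarrow> coeff (total_dcoeff e) r = 0"
    using a b by (simp add: c beta_coeff)
  show "coeff (total_dcoeff e) (CARD('a) ^ (e - 1)) = - dcoeff (e - 1)"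
    using a b card_ge_2[OF p_prime] by (simp add: c beta_coeff coeff0_total_dcoeff)
qed

end

lemma dickson_dcoeff: "i \<le> n \<Longrightarrow> (dickson n i :: 'a mpoly) = (-1) ^ i * dcoeff (n - i)"
  by (simp add: dickson_def dcoeff_def)

lemma totalP_dickson: "i \<le> n \<Longrightarrow> totalP (dickson n i :: 'a mpoly) = smult ((-1) ^ i) (total_dcoeff (n - i))"
proof -
  assume "i \<le> n"
  hence "totalP (dickson n i :: 'a mpoly) = (-1) ^ i * total_dcoeff (n - i)"
    by (simp add: dickson_dcoeff totalP_mult totalP_power totalP_uminus total_dcoeff_def)
  also have "(-1 :: 'a mpoly poly) ^ i = [: (-1) ^ i :]"
  proof -
    have "(-1 :: 'a mpoly poly) = - [: 1 :]" by (simp add: pCons_one)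
    also have "\<dots> = [: -1 :]" by simp
    finally have "(-1 :: 'a mpoly poly) = [: -1 :]" .
    thus ?thesis by (simp add: poly_const_pow)
  qed
  finally show ?thesis by simp
qed

end

section \<open>Leading terms of P_t on Dickson invariants and monomials\<close>

lemma total_dickson_top:
  assumes "prime CARD('a::{field,finite})" "1 \<le> n"
  shows "gap (CARD('a) ^ (n - 1)) (totalP (dickson n n :: 'a mpoly))"
    "coeff (totalP (dickson n n :: 'a mpoly)) (CARD('a) ^ (n - 1)) = - dickson n 1 * dickson n n"
proof -
  show "gap (CARD('a) ^ (n - 1)) (totalP (dickson n n :: 'a mpoly))"
    using total_dcoeff_0_coeff(1)[OF assms] by (simp add: gap_def totalP_dickson[OF assms(1)])
  have d1: "dickson n (Suc 0) = (- 1 :: 'a mpoly) * dcoeff n (n - 1)"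
    using dickson_dcoeff[OF assms(1), of 1 n] assms by simp
  have dn: "dickson n n = (- 1 :: 'a mpoly) ^ n * dcoeff n 0"
    using dickson_dcoeff[OF assms(1), of n n] by simp
  have "coeff (totalP (dickson n n :: 'a mpoly)) (CARD('a) ^ (n - 1)) =
      (-1) ^ n * coeff (total_dcoeff n 0) (CARD('a) ^ (n - 1))"
    unfolding totalP_dickson[OF assms(1) order_refl] by simp
  thus "coeff (totalP (dickson n n :: 'a mpoly)) (CARD('a) ^ (n - 1)) = - dickson n 1 * dickson n n"
    using total_dcoeff_0_coeff(2)[OF assms] by (simp add: d1 dn mult_ac)
qed

lemma total_dickson_lower:
  assumes "prime CARD('a::{field,finite})" "1 \<le> i" "i < n"
  shows "gap (CARD('a) ^ (n - i - 1)) (totalP (dickson n i :: 'a mpoly))"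
    "coeff (totalP (dickson n i :: 'a mpoly)) (CARD('a) ^ (n - i - 1)) = dickson n (i + 1)"
proof -
  have e: "0 < n - i" "n - i < n" "1 \<le> n" using assms by auto
  show "gap (CARD('a) ^ (n - i - 1)) (totalP (dickson n i :: 'a mpoly))"
    using total_dcoeff_coeff(1)[OF assms(1) e(3) e(1,2)] assms
    by (simp add: gap_def totalP_dickson[OF assms(1)])
  have di: "dickson n (Suc i) = (- 1 :: 'a mpoly) ^ (i + 1) * dcoeff n (n - i - 1)"
    using dickson_dcoeff[OF assms(1), of "i + 1" n] assms by simp
  have "coeff (totalP (dickson n i :: 'a mpoly)) (CARD('a) ^ (n - i - 1)) =
      (-1) ^ i * coeff (total_dcoeff n (n - i)) (CARD('a) ^ (n - i - 1))"
    unfolding totalP_dickson[OF assms(1) less_imp_le[OF assms(3)]] by simp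
  thus "coeff (totalP (dickson n i :: 'a mpoly)) (CARD('a) ^ (n - i - 1)) = dickson n (i + 1)"
    using total_dcoeff_coeff(2)[OF assms(1) e(3) e(1,2)] assms by (simp add: di)
qed

text \<open>Both cases at once: P_t d_(n,l) = d_(n,l) + dlead n l * t^(p^(dlead_exp n l)) + ... .\<close>
definition dlead_exp :: "nat \<Rightarrow> nat \<Rightarrow> nat" where
  "dlead_exp n l = (if l = n then n - 1 else n - l - 1)"

definition dlead :: "nat \<Rightarrow> nat \<Rightarrow> 'a::{comm_ring_1,finite} mpoly" where
  "dlead n l = (if l = n then - dickson n 1 * dickson n n else dickson n (Suc l))"

definition dmono :: "nat \<Rightarrow> (nat \<Rightarrow> nat) \<Rightarrow> 'a::{comm_ring_1,finite} mpoly" where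
  "dmono n e = (\<Prod>l\<in>{1..n}. dickson n l ^ e l)"

lemma dmono_add: "dmono n (\<lambda>l. e l + f l) = (dmono n e :: 'a::{comm_ring_1,finite} mpoly) * dmono n f"
  by (simp add: dmono_def power_add prod.distrib)

lemma dmono_delta:
  "j \<in> {1..n} \<Longrightarrow> dmono n (\<lambda>l. if l = j then x else 0) = (dickson n j ^ x :: 'a::{comm_ring_1,finite} mpoly)"
  unfolding dmono_def by (simp add: if_distrib[where f="\<lambda>x. _ ^ x"] cong: if_cong)

lemma dmono_add_single: "j \<in> {1..n} \<Longrightarrow>
  dmono n (\<lambda>l. e l + (if l = j then x else 0)) = (dmono n e :: 'a::{comm_ring_1,finite} mpoly) * dickson n j ^ x"
  by (simp only: dmono_add dmono_delta)

lemma dmono_remove: "l \<in> {1..n} \<Longrightarrow>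
  dickson n l ^ x * (\<Prod>l'\<in>{1..n} - {l}. dickson n l' ^ e l') = (dmono n (e(l := x)) :: 'a::{comm_ring_1,finite} mpoly)"
  unfolding dmono_def by (subst prod.remove[of _ l]) (auto intro!: prod.cong)

context
  fixes n :: nat
  assumes p_prime: "prime CARD('a::{field,finite})" and n1: "1 \<le> n"
begin

lemma total_dickson_gap:
  assumes "l \<in> {1..n}"
  shows "gap (CARD('a) ^ dlead_exp n l) (totalP (dickson n l :: 'a mpoly))"
    "coeff (totalP (dickson n l :: 'a mpoly)) (CARD('a) ^ dlead_exp n l) = dlead n l"
  using total_dickson_top[OF p_prime n1] total_dickson_lower[OF p_prime, of l n] assms
  by (auto simp: dlead_exp_def dlead_def)

text \<open>For an exponent p^h w, the gap is stretched by the Frobenius p^h and the leading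
  coefficient picks up the factor w (Leibniz rule).\<close>
lemma total_dickson_power_gap:
  assumes "l \<in> {1..n}" "x = CARD('a) ^ h * w"
  shows "gap (CARD('a) ^ (dlead_exp n l + h)) (totalP (dickson n l ^ x :: 'a mpoly))"
    "coeff (totalP (dickson n l ^ x :: 'a mpoly)) (CARD('a) ^ (dlead_exp n l + h)) =
       of_nat w * dlead n l ^ (CARD('a) ^ h) * dickson n l ^ (CARD('a) ^ h * (w - 1))"
proof -
  let ?A = "totalP (dickson n l :: 'a mpoly)"
  have P: "CARD('a) ^ h = CHAR('a mpoly) ^ h" by (simp add: CHAR_mpoly_card[OF p_prime])
  note frob = gap_frob[OF prime_CHAR_mpoly[OF p_prime] P total_dickson_gap(1)[OF assms(1)]]
  have t: "totalP (dickson n l ^ x :: 'a mpoly) = (?A ^ (CARD('a) ^ h)) ^ w"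
    by (simp add: assms(2) totalP_power power_mult)
  have c1: "coeff (?A ^ (CARD('a) ^ h)) (CARD('a) ^ dlead_exp n l * CARD('a) ^ h) = dlead n l ^ (CARD('a) ^ h)"
    using frob(2) total_dickson_gap(2)[OF assms(1)] by simp
  have c0: "coeff (?A ^ (CARD('a) ^ h)) 0 = dickson n l ^ (CARD('a) ^ h)"
    by (simp add: coeff_0_power totalP_coeff0)
  have pos: "0 < CARD('a) ^ dlead_exp n l * CARD('a) ^ h" by simp
  note gp = gap_power[OF frob(1) pos, of w]
  show "gap (CARD('a) ^ (dlead_exp n l + h)) (totalP (dickson n l ^ x :: 'a mpoly))"
    using gp by (simp add: t power_add)
  show "coeff (totalP (dickson n l ^ x :: 'a mpoly)) (CARD('a) ^ (dlead_exp n l + h)) =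
       of_nat w * dlead n l ^ (CARD('a) ^ h) * dickson n l ^ (CARD('a) ^ h * (w - 1))"
    using gp by (simp add: t power_add c1 c0 power_mult)
qed

text \<open>If every factor of a Dickson monomial has a gap of size at least N, then P^N acts on the
  monomial as a derivation, touching one factor at a time.\<close>
lemma steenrod_dmono:
  assumes N: "0 < N"
    and hw: "\<forall>l\<in>{1..n}. \<exists>h w. e l = CARD('a) ^ h * w \<and> N \<le> CARD('a) ^ (dlead_exp n l + h)"
  shows "steenrodP N (dmono n e :: 'a mpoly) =
    (\<Sum>l\<in>{1..n}. coeff (totalP (dickson n l ^ e l :: 'a mpoly)) N * (\<Prod>l'\<in>{1..n} - {l}. dickson n l' ^ e l'))"
proof -
  have g: "\<forall>l\<in>{1..n}. gap N (totalP (dickson n l ^ e l :: 'a mpoly))"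
  proof
    fix l assume l: "l \<in> {1..n}"
    then obtain h w where "e l = CARD('a) ^ h * w" "N \<le> CARD('a) ^ (dlead_exp n l + h)" using hw by blast
    thus "gap N (totalP (dickson n l ^ e l :: 'a mpoly))" using total_dickson_power_gap(1)[OF l] gap_mono by blast
  qed
  have "steenrodP N (dmono n e :: 'a mpoly) = coeff (\<Prod>l\<in>{1..n}. totalP (dickson n l ^ e l :: 'a mpoly)) N"
    by (simp add: steenrodP_def dmono_def totalP_prod)
  also have "\<dots> = (\<Sum>l\<in>{1..n}. coeff (totalP (dickson n l ^ e l :: 'a mpoly)) N *
       (\<Prod>l'\<in>{1..n} - {l}. coeff (totalP (dickson n l' ^ e l' :: 'a mpoly)) 0))"
    using gap_prod[OF _ g N] by simp
  finally show ?thesis by (simp add: totalP_coeff0)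
qed

lemma steenrod_dmono_term_vanishes:
  assumes "l \<in> {1..n}" "0 < N" "\<exists>h w. e l = CARD('a) ^ h * w \<and> N < CARD('a) ^ (dlead_exp n l + h)"
  shows "coeff (totalP (dickson n l ^ e l :: 'a mpoly)) N * (\<Prod>l'\<in>{1..n} - {l}. dickson n l' ^ e l') = 0"
proof -
  obtain h w where "e l = CARD('a) ^ h * w" "N < CARD('a) ^ (dlead_exp n l + h)" using assms(3) by blast
  thus ?thesis using gap_coeff[OF total_dickson_power_gap(1)[OF assms(1)] assms(2)] by simp
qed

lemma steenrod_dmono_no_active:
  assumes N: "0 < N"
    and all: "\<forall>l\<in>{1..n}. \<exists>h w. e l = CARD('a) ^ h * w \<and> N < CARD('a) ^ (dlead_exp n l + h)"
  shows "steenrodP N (dmono n e :: 'a mpoly) = 0"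
proof -
  have "\<forall>l\<in>{1..n}. \<exists>h w. e l = CARD('a) ^ h * w \<and> N \<le> CARD('a) ^ (dlead_exp n l + h)"
    using all less_imp_le_nat by blast
  thus ?thesis
    using steenrod_dmono[OF N] steenrod_dmono_term_vanishes[OF _ N] all by (simp add: sum.neutral)
qed

lemma steenrod_dmono_one_active:
  assumes l0: "l0 \<in> {1..n}" and e0: "e l0 = CARD('a) ^ h0 * w0" and N: "N = CARD('a) ^ (dlead_exp n l0 + h0)"
    and others: "\<forall>l\<in>{1..n} - {l0}. \<exists>h w. e l = CARD('a) ^ h * w \<and> N < CARD('a) ^ (dlead_exp n l + h)"
  shows "steenrodP N (dmono n e :: 'a mpoly) =
    of_nat w0 * dlead n l0 ^ (CARD('a) ^ h0) * dmono n (e(l0 := CARD('a) ^ h0 * (w0 - 1)))"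
proof -
  let ?term = "\<lambda>l. coeff (totalP (dickson n l ^ e l :: 'a mpoly)) N * (\<Prod>l'\<in>{1..n} - {l}. dickson n l' ^ e l')"
  have N0: "0 < N" using N by simp
  have hw: "\<forall>l\<in>{1..n}. \<exists>h w. e l = CARD('a) ^ h * w \<and> N \<le> CARD('a) ^ (dlead_exp n l + h)"
    using others e0 N by (metis Diff_iff empty_iff insert_iff less_imp_le_nat order_refl)
  have "steenrodP N (dmono n e :: 'a mpoly) = (\<Sum>l\<in>{1..n}. ?term l)"
    by (rule steenrod_dmono[OF N0 hw])
  also have "\<dots> = ?term l0 + (\<Sum>l\<in>{1..n} - {l0}. ?term l)"
    by (rule sum.remove) (use l0 in auto)
  also have "(\<Sum>l\<in>{1..n} - {l0}. ?term l) = 0"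
    using steenrod_dmono_term_vanishes[OF _ N0] others by (simp add: sum.neutral)
  also have "?term l0 = of_nat w0 * dlead n l0 ^ (CARD('a) ^ h0) *
      (dickson n l0 ^ (CARD('a) ^ h0 * (w0 - 1)) * (\<Prod>l'\<in>{1..n} - {l0}. dickson n l' ^ e l'))"
    using total_dickson_power_gap(2)[OF l0 e0] N by (simp add: mult.assoc)
  finally show ?thesis by (simp only: add_0_right dmono_remove[OF l0])
qed

lemma steenrod_dmono_all_active:
  assumes N: "0 < N"
    and hw: "\<forall>l\<in>{1..n}. e l = CARD('a) ^ hx l * ww l \<and> N = CARD('a) ^ (dlead_exp n l + hx l)"
  shows "steenrodP N (dmono n e :: 'a mpoly) =
    (\<Sum>l\<in>{1..n}. of_nat (ww l) * dlead n l ^ (CARD('a) ^ hx l) * dmono n (e(l := CARD('a) ^ hx l * (ww l - 1))))"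
proof -
  have hw': "\<forall>l\<in>{1..n}. \<exists>h w. e l = CARD('a) ^ h * w \<and> N \<le> CARD('a) ^ (dlead_exp n l + h)"
    using hw by (metis order_refl)
  show ?thesis unfolding steenrod_dmono[OF N hw']
  proof (rule sum.cong[OF refl])
    fix l assume l: "l \<in> {1..n}"
    have "coeff (totalP (dickson n l ^ e l :: 'a mpoly)) N =
        of_nat (ww l) * dlead n l ^ (CARD('a) ^ hx l) * dickson n l ^ (CARD('a) ^ hx l * (ww l - 1))"
      using total_dickson_power_gap(2)[OF l, of "e l" "hx l" "ww l"] hw l by simp
    thus "coeff (totalP (dickson n l ^ e l :: 'a mpoly)) N * (\<Prod>l'\<in>{1..n} - {l}. dickson n l' ^ e l') =
      of_nat (ww l) * dlead n l ^ (CARD('a) ^ hx l) * dmono n (e(l := CARD('a) ^ hx l * (ww l - 1)))"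
      by (simp add: mult.assoc flip: dmono_remove[OF l])
  qed
qed

end

section \<open>Iterating the operations P(c,j) on a Dickson monomial\<close>

text \<open>Bookkeeping for the term created by the digit a_i: it sits at position front n i s after
  s operations (starting from position i, or from position 0 if i = n) and dies when it reaches
  position n, i.e. after lifetime n i operations.\<close>
definition lifetime :: "nat \<Rightarrow> nat \<Rightarrow> nat" where
  "lifetime n i = (if i = n then n else n - i)"

definition front :: "nat \<Rightarrow> nat \<Rightarrow> nat \<Rightarrow> nat" where
  "front n i s = (if i = n then s else i + s)"

lemma lifetime_bounds: "i \<in> {1..n} \<Longrightarrow> 1 \<le> lifetime n i \<and> lifetime n i \<le> n"
  by (auto simp: lifetime_def)

lemma lifetime_inj: "i \<in> {1..n} \<Longrightarrow> i' \<in> {1..n} \<Longrightarrow> lifetime n i = lifetime n i' \<Longrightarrow> i = i'"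
  by (auto simp: lifetime_def split: if_splits)

lemma front_bounds:
  assumes "i \<in> {1..n}" "1 \<le> s" "s \<le> lifetime n i"
  shows "front n i s \<in> {1..n}" "front n i s = n \<longleftrightarrow> s = lifetime n i"
  using assms by (auto simp: front_def lifetime_def)

text \<open>The index j of the theorem is the largest lifetime of a nonzero digit.\<close>
lemma max_lifetime:
  assumes "n \<ge> 1" "\<exists>i\<in>{1..n}. a i \<noteq> 0"
    and "j = Max ((if a n \<noteq> 0 then {n} else {}) \<union> {n - i | i. 1 \<le> i \<and> i < n \<and> a i \<noteq> 0})"
  obtains i0 where "i0 \<in> {1..n}" "a i0 \<noteq> 0" "lifetime n i0 = j"
    "\<And>i. i \<in> {1..n} \<Longrightarrow> a i \<noteq> 0 \<Longrightarrow> lifetime n i \<le> j"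
proof -
  let ?I = "{i\<in>{1..n}. a i \<noteq> 0}"
  have "(if a n \<noteq> 0 then {n} else {}) \<union> {n - i | i. 1 \<le> i \<and> i < n \<and> a i \<noteq> 0} = lifetime n ` ?I"
  proof (intro equalityI subsetI)
    fix x assume "x \<in> (if a n \<noteq> 0 then {n} else {}) \<union> {n - i | i. 1 \<le> i \<and> i < n \<and> a i \<noteq> 0}"
    then consider "a n \<noteq> 0" "x = n" | i where "1 \<le> i" "i < n" "a i \<noteq> 0" "x = n - i"
      by (auto split: if_splits)
    thus "x \<in> lifetime n ` ?I"
    proof cases
      case 1 thus ?thesis using assms(1) by (intro rev_image_eqI[of n]) (auto simp: lifetime_def)
    next
      case 2 thus ?thesis by (intro rev_image_eqI[of i]) (auto simp: lifetime_def)
    qed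
  qed (auto simp: lifetime_def)
  hence j: "j = Max (lifetime n ` ?I)" using assms(3) by simp
  have "?I \<noteq> {}" using assms(2) by auto
  hence "j \<in> lifetime n ` ?I" unfolding j by (intro Max_in) auto
  moreover have "\<And>i. i \<in> ?I \<Longrightarrow> lifetime n i \<le> j" unfolding j by simp
  ultimately show ?thesis using that by blast
qed

lemma unique_survivor:
  assumes "i0 \<in> {1..n}" "a i0 \<noteq> 0" "lifetime n i0 = j"
    and "\<And>i. i \<in> {1..n} \<Longrightarrow> a i \<noteq> 0 \<Longrightarrow> lifetime n i \<le> j"
  shows "{i\<in>{1..n}. a i \<noteq> 0 \<and> j \<le> lifetime n i} = {i0}"
proof (intro equalityI subsetI)
  fix i assume "i \<in> {i\<in>{1..n}. a i \<noteq> 0 \<and> j \<le> lifetime n i}"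
  hence "i \<in> {1..n}" "lifetime n i = lifetime n i0" using assms(3) assms(4)[of i] by auto
  thus "i \<in> {i0}" using lifetime_inj[OF _ assms(1)] by simp
qed (use assms in simp)

text \<open>The coefficient with which the term of digit a_i appears: P^(p^(k_i)) hits d_(n,i)^(a_i p^(k_i))
  with multiplicity a_i, and the leading coefficient of P_t d_(n,n) carries a sign.\<close>
definition orbit_sign :: "nat \<Rightarrow> (nat \<Rightarrow> nat) \<Rightarrow> nat \<Rightarrow> 'a::ring_1" where
  "orbit_sign n a i = (if i = n then - of_nat (a n) else of_nat (a i))"

lemma orbit_sign_nonzero:
  assumes "prime CARD('a::{field,finite})" "0 < a i" "a i < CARD('a)"
  shows "(orbit_sign n a i :: 'a) \<noteq> 0"
proof -
  have "\<not> CHAR('a) dvd a i" using assms CHAR_eq_card[OF assms(1)] by (auto dest: dvd_imp_le)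
  thus ?thesis by (cases "i = n") (simp_all add: orbit_sign_def of_nat_eq_0_iff_char_dvd)
qed

text \<open>Exponent vector of that term after s operations: the factor d_(n,i)^(p^(k_i)) of d has been
  used up (unless i = n, where d_(n,n) is restored) and a factor d_(n,front)^(p^(k_i)) created.\<close>
definition orbit_exp :: "nat \<Rightarrow> nat \<Rightarrow> (nat \<Rightarrow> nat) \<Rightarrow> (nat \<Rightarrow> nat) \<Rightarrow> nat \<Rightarrow> nat \<Rightarrow> nat \<Rightarrow> nat" where
  "orbit_exp q n k m i s l = m l - (if l = i \<and> i \<noteq> n then q ^ k i else 0) + (if l = front n i s then q ^ k i else 0)"

text \<open>The setting of the theorem: exponents m_l = a_l p^(k_l) with k_l + dlead_exp n l = c.\<close>
context
  fixes n c :: nat and a k m :: "nat \<Rightarrow> nat"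
  assumes p_prime: "prime CARD('a::{field,finite})"
    and n_ge: "n \<ge> 1"
    and c_ge: "c \<ge> n - 1"
    and k_def: "\<And>i. k i = (if i = n then c + 1 - n else c + i + 1 - n)"
    and m_def: "\<And>i. m i = a i * CARD('a) ^ k i"
begin

definition orbit_term :: "nat \<Rightarrow> nat \<Rightarrow> 'a mpoly" where
  "orbit_term i s = mconst (orbit_sign n a i) * dmono n (orbit_exp CARD('a) n k m i s)"

lemma dlead_exp_plus_k: "l \<in> {1..n} \<Longrightarrow> dlead_exp n l + k l = c"
  using c_ge n_ge by (auto simp: dlead_exp_def k_def)

lemma k_front: "i \<in> {1..n} \<Longrightarrow> front n i s < n \<Longrightarrow> k (front n i s) = k i + s"
  using c_ge n_ge by (auto simp: front_def k_def)

lemma m_minus_unit: "m l - CARD('a) ^ k l = CARD('a) ^ k l * (a l - 1)"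
  by (metis diff_mult_distrib2 mult.commute mult.right_neutral m_def)

lemma k_ge_k_top: "i \<in> {1..n} \<Longrightarrow> k n \<le> k i"
  by (auto simp: k_def intro: diff_le_mono)

lemma quiet_factor:
  assumes "l \<in> {1..n}" "CARD('a) ^ k l dvd x" "1 \<le> s" "s \<le> c"
  shows "\<exists>h w. x = CARD('a) ^ h * w \<and> CARD('a) ^ (c - s) < CARD('a) ^ (dlead_exp n l + h)"
proof -
  obtain w where "x = CARD('a) ^ k l * w" using assms(2) by (auto simp: dvd_def)
  moreover have "CARD('a) ^ (c - s) < CARD('a) ^ (dlead_exp n l + k l)"
    using dlead_exp_plus_k[OF assms(1)] assms(3,4) by (intro card_power_less[OF p_prime]) simp
  ultimately show ?thesis by blast
qed

lemma orbit_exp_dvd: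
  assumes "i \<in> {1..n}" "l \<in> {1..n}" "l \<noteq> front n i s \<or> front n i s = n"
  shows "CARD('a) ^ k l dvd orbit_exp CARD('a) n k m i s l"
proof -
  have "CARD('a) ^ k l dvd m l - (if l = i \<and> i \<noteq> n then CARD('a) ^ k i else 0)"
    by (auto simp: m_def intro: dvd_diff_nat)
  moreover have "CARD('a) ^ k l dvd (if l = front n i s then CARD('a) ^ k i else 0)"
    using assms k_ge_k_top[OF assms(1)] by (auto intro: le_imp_power_dvd)
  ultimately show ?thesis unfolding orbit_exp_def by (rule dvd_add)
qed

lemma orbit_exp_front:
  assumes "i \<in> {1..n}" "1 \<le> s" "front n i s < n"
  shows "orbit_exp CARD('a) n k m i s (front n i s) = CARD('a) ^ k i * (a (front n i s) * CARD('a) ^ s + 1)"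
  using assms k_front[OF assms(1,3)]
  by (auto simp: orbit_exp_def m_def power_add algebra_simps front_def)

lemma orbit_exp_Suc:
  assumes "i \<in> {1..n}" "1 \<le> s" "front n i s < n"
  shows "orbit_exp CARD('a) n k m i (Suc s) =
    (\<lambda>l. ((orbit_exp CARD('a) n k m i s)(front n i s := CARD('a) ^ k i * (a (front n i s) * CARD('a) ^ s))) l
       + (if l = Suc (front n i s) then CARD('a) ^ k i else 0))"
  using assms k_front[OF assms(1,3)]
  by (auto simp: fun_eq_iff orbit_exp_def m_def power_add algebra_simps front_def)

text \<open>The s-th operation (s \<ge> 1) moves the term of digit a_i one step, or kills it at the end of its
  life: exactly one factor (the front) is active; its multiplicity a p^s + 1 is 1 in F_p.\<close>
lemma steenrod_orbit_step:
  assumes i: "i \<in> {1..n}" and s: "1 \<le> s" "s \<le> lifetime n i" "s \<le> c"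
  shows "steenrodP (CARD('a) ^ (c - s)) (dmono n (orbit_exp CARD('a) n k m i s) :: 'a mpoly) =
    (if s < lifetime n i then dmono n (orbit_exp CARD('a) n k m i (Suc s)) else 0)"
proof (cases "s < lifetime n i")
  case True
  let ?f = "front n i s" and ?E = "orbit_exp CARD('a) n k m i s" and ?u = "CARD('a) ^ k i"
  have f: "?f \<in> {1..n}" "?f < n" using front_bounds[OF i s(1,2)] True by auto
  have N: "CARD('a) ^ (c - s) = CARD('a) ^ (dlead_exp n ?f + k i)"
  proof -
    have "dlead_exp n ?f + k i = c - s" using dlead_exp_plus_k[OF f(1)] k_front[OF i f(2)] by simp
    thus ?thesis by simp
  qed
  have quiet: "\<forall>l\<in>{1..n} - {?f}. \<exists>h w. ?E l = CARD('a) ^ h * w \<and> CARD('a) ^ (c - s) < CARD('a) ^ (dlead_exp n l + h)"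
    using quiet_factor[OF _ orbit_exp_dvd[OF i] s(1,3)] by blast
  have mult: "(of_nat (a ?f * CARD('a) ^ s + 1) :: 'a mpoly) = 1"
    using of_nat_CHAR[where 'a="'a mpoly"] s(1) by (simp add: CHAR_mpoly_card[OF p_prime])
  have "steenrodP (CARD('a) ^ (c - s)) (dmono n ?E :: 'a mpoly) =
      of_nat (a ?f * CARD('a) ^ s + 1) * dlead n ?f ^ ?u * dmono n (?E(?f := ?u * (a ?f * CARD('a) ^ s + 1 - 1)))"
    by (rule steenrod_dmono_one_active[OF p_prime n_ge f(1) orbit_exp_front[OF i s(1) f(2)] N quiet])
  also have "\<dots> = dmono n (?E(?f := ?u * (a ?f * CARD('a) ^ s))) * dickson n (Suc ?f) ^ ?u"
    using f(2) unfolding mult by (simp add: dlead_def)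
  also have "\<dots> = dmono n (orbit_exp CARD('a) n k m i (Suc s))"
  proof -
    have sf: "Suc ?f \<in> {1..n}" using f by simp
    show ?thesis by (simp only: orbit_exp_Suc[OF i s(1) f(2)] dmono_add_single[OF sf])
  qed
  finally show ?thesis using True by simp
next
  case False
  hence "s = lifetime n i" using s(2) by simp
  hence "front n i s = n" using front_bounds(2)[OF i s(1,2)] by simp
  hence "\<forall>l\<in>{1..n}. \<exists>h w. orbit_exp CARD('a) n k m i s l = CARD('a) ^ h * w \<and>
      CARD('a) ^ (c - s) < CARD('a) ^ (dlead_exp n l + h)"
    using quiet_factor[OF _ orbit_exp_dvd[OF i] s(1,3)] by blast
  thus ?thesis using steenrod_dmono_no_active[OF p_prime n_ge] False by simp
qed

text \<open>The first operation P^(p^c): every factor d_(n,l)^(m_l) is active, and each nonzero digit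
  starts its term.\<close>
lemma orbit_term_start:
  assumes l: "l \<in> {1..n}" and al: "a l \<noteq> 0"
  shows "of_nat (a l) * dlead n l ^ (CARD('a) ^ k l) * dmono n (m(l := CARD('a) ^ k l * (a l - 1))) = orbit_term l 1"
proof (cases "l = n")
  case False
  hence ln: "Suc l \<in> {1..n}" using l by auto
  have "orbit_exp CARD('a) n k m l 1 =
      (\<lambda>j. (m(l := CARD('a) ^ k l * (a l - 1))) j + (if j = Suc l then CARD('a) ^ k l else 0))"
    using False by (auto simp: orbit_exp_def front_def fun_eq_iff m_minus_unit)
  hence "dmono n (orbit_exp CARD('a) n k m l 1) =
      (dmono n (m(l := CARD('a) ^ k l * (a l - 1))) :: 'a mpoly) * dickson n (Suc l) ^ CARD('a) ^ k l"
    by (simp only: dmono_add_single[OF ln])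
  thus ?thesis using False by (simp add: orbit_term_def orbit_sign_def dlead_def mconst_of_nat mult_ac)
next
  case True
  have one: "1 \<in> {1..n}" using n_ge by auto
  have "orbit_exp CARD('a) n k m n 1 = (\<lambda>j. ((m(n := CARD('a) ^ k n * (a n - 1))) j +
        (if j = 1 then CARD('a) ^ k n else 0)) + (if j = n then CARD('a) ^ k n else 0))"
    using True al by (auto simp: orbit_exp_def front_def fun_eq_iff m_def algebra_simps diff_mult_distrib2)
  hence "dmono n (orbit_exp CARD('a) n k m n 1) = (dmono n (m(n := CARD('a) ^ k n * (a n - 1))) :: 'a mpoly) *
      dickson n 1 ^ CARD('a) ^ k n * dickson n n ^ CARD('a) ^ k n"
    by (simp only: dmono_add_single[OF one] dmono_add_single[OF l[unfolded True]])
  moreover have "dlead n n ^ (CARD('a) ^ k n) = - (dickson n 1 ^ CARD('a) ^ k n * dickson n n ^ CARD('a) ^ k n :: 'a mpoly)"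
    using minus_power_CHAR_pow[OF prime_CHAR_mpoly[OF p_prime], of "dickson n 1 * dickson n n" "k n"]
    by (simp add: dlead_def CHAR_mpoly_card[OF p_prime] power_mult_distrib)
  ultimately show ?thesis using True by (simp add: orbit_term_def orbit_sign_def mconst_of_nat mconst_uminus mult_ac)
qed

lemma steenrod_first:
  "steenrodP (CARD('a) ^ c) (dmono n m :: 'a mpoly) = (\<Sum>i\<in>{i\<in>{1..n}. a i \<noteq> 0}. orbit_term i 1)"
proof -
  have hw: "\<forall>l\<in>{1..n}. m l = CARD('a) ^ k l * a l \<and> CARD('a) ^ c = CARD('a) ^ (dlead_exp n l + k l)"
    using dlead_exp_plus_k by (simp add: m_def mult.commute)
  have "steenrodP (CARD('a) ^ c) (dmono n m :: 'a mpoly) =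
    (\<Sum>l\<in>{1..n}. of_nat (a l) * dlead n l ^ (CARD('a) ^ k l) * dmono n (m(l := CARD('a) ^ k l * (a l - 1))))"
    by (rule steenrod_dmono_all_active[OF p_prime n_ge _ hw]) simp
  also have "\<dots> = (\<Sum>l\<in>{i\<in>{1..n}. a i \<noteq> 0}.
      of_nat (a l) * dlead n l ^ (CARD('a) ^ k l) * dmono n (m(l := CARD('a) ^ k l * (a l - 1))))"
    by (rule sum.mono_neutral_right) auto
  also have "\<dots> = (\<Sum>i\<in>{i\<in>{1..n}. a i \<noteq> 0}. orbit_term i 1)"
    by (rule sum.cong[OF refl], rule orbit_term_start) auto
  finally show ?thesis .
qed

lemma Pcj_dmono:
  "1 \<le> s \<Longrightarrow> s \<le> c + 1 \<Longrightarrow>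
    Pcj c s (dmono n m :: 'a mpoly) = (\<Sum>i\<in>{i\<in>{1..n}. a i \<noteq> 0 \<and> s \<le> lifetime n i}. orbit_term i s)"
proof (induction s)
  case 0 thus ?case by simp
next
  case (Suc s)
  show ?case
  proof (cases "s = 0")
    case True
    have "{i\<in>{1..n}. a i \<noteq> 0 \<and> Suc s \<le> lifetime n i} = {i\<in>{1..n}. a i \<noteq> 0}"
      using True lifetime_bounds by auto
    thus ?thesis using True steenrod_first by simp
  next
    case False
    hence s1: "1 \<le> s" and sc: "s \<le> c" using Suc.prems by auto
    let ?I = "{i\<in>{1..n}. a i \<noteq> 0 \<and> s \<le> lifetime n i}"
    have "Pcj c (Suc s) (dmono n m :: 'a mpoly) = (\<Sum>i\<in>?I. steenrodP (CARD('a) ^ (c - s)) (orbit_term i s))"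
      using Suc.IH s1 Suc.prems by (simp add: steenrodP_sum)
    also have "\<dots> = (\<Sum>i\<in>?I. if s < lifetime n i then orbit_term i (Suc s) else 0)"
      using steenrod_orbit_step[OF _ s1 _ sc]
      by (intro sum.cong refl) (simp add: orbit_term_def steenrodP_mconst_mult)
    also have "\<dots> = (\<Sum>i\<in>{i\<in>{1..n}. a i \<noteq> 0 \<and> Suc s \<le> lifetime n i}. orbit_term i (Suc s))"
    proof -
      have "{i\<in>?I. s < lifetime n i} = {i\<in>{1..n}. a i \<noteq> 0 \<and> Suc s \<le> lifetime n i}"
        by auto
      thus ?thesis by (simp add: sum.inter_filter[symmetric])
    qed
    finally show ?thesis .
  qed
qed

lemma Pcj_dmono_after_max:
  assumes "\<And>i. i \<in> {1..n} \<Longrightarrow> a i \<noteq> 0 \<Longrightarrow> lifetime n i \<le> j" "j < t" "t \<le> c + 1"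
  shows "Pcj c t (dmono n m :: 'a mpoly) = 0"
proof -
  have none: "{i\<in>{1..n}. a i \<noteq> 0 \<and> t \<le> lifetime n i} = {}" using assms(1,2) by fastforce
  have "Pcj c t (dmono n m :: 'a mpoly) = (\<Sum>i\<in>{i\<in>{1..n}. a i \<noteq> 0 \<and> t \<le> lifetime n i}. orbit_term i t)"
    using Pcj_dmono[of t] assms(2,3) by simp
  thus ?thesis by (simp only: none sum.empty)
qed

lemma Pcj_dmono_at_max:
  assumes i0: "i0 \<in> {1..n}" "a i0 \<noteq> 0" "lifetime n i0 = j"
    and j_max: "\<And>i. i \<in> {1..n} \<Longrightarrow> a i \<noteq> 0 \<Longrightarrow> lifetime n i \<le> j"
  shows "if j = n then Pcj c j (dmono n m :: 'a mpoly) = mconst (orbit_sign n a i0) * dickson n n ^ (CARD('a) ^ k n) * dmono n m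
     else Pcj c j (dmono n m :: 'a mpoly) = mconst (orbit_sign n a i0) * dickson n n ^ (CARD('a) ^ k (n - j)) *
       (\<Prod>i\<in>{1..n}. dickson n i ^ (if i = n - j then m i - CARD('a) ^ k (n - j) else m i))"
proof -
  let ?u = "mconst (orbit_sign n a i0) :: 'a mpoly"
  have nn: "n \<in> {1..n}" using n_ge by simp
  have "Pcj c j (dmono n m :: 'a mpoly) = (\<Sum>i\<in>{i\<in>{1..n}. a i \<noteq> 0 \<and> j \<le> lifetime n i}. orbit_term i j)"
  proof (rule Pcj_dmono)
    show "1 \<le> j" "j \<le> c + 1" using lifetime_bounds[OF i0(1)] i0(3) c_ge by linarith+
  qed
  moreover have "{i\<in>{1..n}. a i \<noteq> 0 \<and> j \<le> lifetime n i} = {i0}"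
    by (rule unique_survivor[where a=a, OF i0 j_max])
  ultimately have Pj: "Pcj c j (dmono n m) = ?u * dmono n (orbit_exp CARD('a) n k m i0 j)"
    by (simp add: orbit_term_def)
  show ?thesis
  proof (cases "j = n")
    case True
    hence "i0 = n" using i0 by (simp add: lifetime_def split: if_splits)
    hence "orbit_exp CARD('a) n k m i0 j = (\<lambda>l. m l + (if l = n then CARD('a) ^ k n else 0))"
      using True by (simp add: orbit_exp_def front_def fun_eq_iff)
    hence "Pcj c j (dmono n m) = ?u * (dmono n m * dickson n n ^ (CARD('a) ^ k n))"
      by (simp only: Pj dmono_add_single[OF nn])
    thus ?thesis using True by (simp add: mult_ac)
  next
    case False
    let ?e = "\<lambda>l. if l = n - j then m l - CARD('a) ^ k (n - j) else m l"
    have i0n: "i0 \<noteq> n" "i0 = n - j" "front n i0 j = n"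
      using i0(1,3) False by (auto simp: lifetime_def front_def split: if_splits)
    hence "orbit_exp CARD('a) n k m i0 j = (\<lambda>l. ?e l + (if l = n then CARD('a) ^ k (n - j) else 0))"
      by (auto simp: orbit_exp_def)
    hence "Pcj c j (dmono n m) = ?u * (dmono n ?e * dickson n n ^ (CARD('a) ^ k (n - j)))"
      by (simp only: Pj dmono_add_single[OF nn])
    hence "Pcj c j (dmono n m) = ?u * dickson n n ^ (CARD('a) ^ k (n - j)) * dmono n ?e"
      by (simp only: mult_ac)
    thus ?thesis using False by (simp only: dmono_def if_False)
  qed
qed

end

theorem lemma3:
  fixes n c :: nat and a :: "nat \<Rightarrow> nat" and k m :: "nat \<Rightarrow> nat" and j :: nat
    and d :: "'a::{field,finite} mpoly"
  assumes p_prime: "prime (CARD('a))"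
    and n_ge: "n \<ge> 1"
    and c_ge: "c \<ge> n - 1"
    and k_def: "\<And>i. k i = (if i = n then c + 1 - n else c + i + 1 - n)"
    and a_lt: "\<forall>i\<in>{1..n}. a i < CARD('a)"
    and a_nz: "\<exists>i\<in>{1..n}. a i \<noteq> 0"
    and m_def: "\<And>i. m i = a i * CARD('a) ^ k i"
    and d_def: "d = (\<Prod>i\<in>{1..n}. dickson n i ^ m i)"
    and j_def: "j = Max ((if a n \<noteq> 0 then {n} else {}) \<union> {n - i | i. 1 \<le> i \<and> i < n \<and> a i \<noteq> 0})"
  shows "\<exists>u::'a. u \<noteq> 0 \<and>
      (if j = n then Pcj c j d = mconst u * dickson n n ^ (CARD('a) ^ k n) * d
       else Pcj c j d = mconst u * dickson n n ^ (CARD('a) ^ k (n - j)) *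
              (\<Prod>i\<in>{1..n}. dickson n i ^ (if i = n - j then m i - CARD('a) ^ k (n - j) else m i)))
      \<and> (\<forall>t::nat. j < t \<and> t \<le> c + 1 \<longrightarrow> Pcj c t d = 0)"
proof -
  obtain i0 where i0: "i0 \<in> {1..n}" "a i0 \<noteq> 0" "lifetime n i0 = j"
    and j_max: "\<And>i. i \<in> {1..n} \<Longrightarrow> a i \<noteq> 0 \<Longrightarrow> lifetime n i \<le> j"
    using max_lifetime[OF n_ge a_nz j_def] by blast
  note setting = p_prime n_ge c_ge k_def m_def
  have d: "d = dmono n m" by (simp add: d_def dmono_def)
  show ?thesis
  proof (intro exI conjI allI impI)
    show "orbit_sign n a i0 \<noteq> (0::'a)"
      using orbit_sign_nonzero[OF p_prime] i0 a_lt by simp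
    show "if j = n then Pcj c j d = mconst (orbit_sign n a i0) * dickson n n ^ (CARD('a) ^ k n) * d
       else Pcj c j d = mconst (orbit_sign n a i0) * dickson n n ^ (CARD('a) ^ k (n - j)) *
              (\<Prod>i\<in>{1..n}. dickson n i ^ (if i = n - j then m i - CARD('a) ^ k (n - j) else m i))"
      unfolding d by (rule Pcj_dmono_at_max[OF setting i0 j_max])
    show "Pcj c t d = 0" if "j < t \<and> t \<le> c + 1" for t
      unfolding d using Pcj_dmono_after_max[OF setting j_max] that by blast
  qed
qed

end
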